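(* Let $C$ be a hyperelliptic curve of genus $3$ over $\mathbb{C}$ given by $y^2=f(x)$ with $f$ a separable polynomial of degree $8$. Let $w\in\mathbb{C}$ with $f(w)\neq0$ and let $P_m^w$ ($m\in\{1,2\}$) be one of the two points of $C$ over $x=w$. Let $f_{w,4,m}(x)$ be the degree-$4$ Taylor polynomial at $x=w$ of the local branch of $y$ (as a function of $x$) through $P_m^w$. Then the $2$-gap sequence of $P_m^w$ is $\{1,2,3,4,5,n_6\}$ with $n_6=v_{P_m^w}(y-f_{w,4,m}(x))+1$. Consequently, if $n_6>6$, then $P_m^w$ is a $2$-Weierstrass point with $2$-weight $n_6-6$.
   Context: $v_P$ denotes the order of vanishing (valuation) at the point $P$. For a point $P$ on a smooth projective curve $C$ of genus $g$ and $q\ge1$, let $d_q=\dim H^0(C,(\Omega^1)^q)$ (holomorphic $q$-differentials; $d_q=(g-1)(2q-1)$ for $q\ge2$, so $d_2=6$ for $g=3$). Choose a basis $\psi_1,\dots,\psi_{d_q}$ with strictly increasing orders of vanishing at $P$ and set $n_i=\mathrm{ord}_P(\psi_i)+1$; $\{n_1,\dots,n_{d_q}\}$ is the $q$-gap sequence of $P$, $w^{(q)}(P)=\sum_i(n_i-i)$ is its $q$-weight, and $P$ is a $q$-Weierstrass point if $w^{(q)}(P)>0$. *)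

theory Defs
  imports "HOL-Complex_Analysis.Complex_Analysis" "HOL-Computational_Algebra.Polynomial"
begin

text \<open>Points: affine points (w, y0) with y0^2 = f(w), and the two points at infinity,
  described in the chart u = 1/x, v = y/x^4, where v^2 = (reflect_poly f)(u);
  the point at infinity Inf c has (u,v) = (0,c) with c^2 = lead_coeff f.\<close>

datatype hpt = Aff complex complex | Inf complex

definition separable_poly :: "complex poly \<Rightarrow> bool" where
  "separable_poly f \<longleftrightarrow> coprime f (pderiv f)"

definition on_curve :: "complex poly \<Rightarrow> hpt \<Rightarrow> bool" where
  "on_curve f P = (case P of Aff w y0 \<Rightarrow> y0^2 = poly f w | Inf c \<Rightarrow> c^2 = lead_coeff f)"

text \<open>A local holomorphic parametrisation (a,b) of the curve near P (an immersion of a disc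
  into the curve, hence a local coordinate at P). For affine points (a,b) = (x,y); for points
  at infinity (a,b) = (u,v).\<close>
definition local_param :: "complex poly \<Rightarrow> hpt \<Rightarrow> (complex \<Rightarrow> complex) \<Rightarrow> (complex \<Rightarrow> complex) \<Rightarrow> bool" where
  "local_param f P a b \<longleftrightarrow> (\<exists>r>0. a holomorphic_on ball 0 r \<and> b holomorphic_on ball 0 r \<and>
     (deriv a 0 \<noteq> 0 \<or> deriv b 0 \<noteq> 0) \<and>
     (case P of
        Aff w y0 \<Rightarrow> a 0 = w \<and> b 0 = y0 \<and> (\<forall>t\<in>ball 0 r. (b t)^2 = poly f (a t))
      | Inf c \<Rightarrow> a 0 = 0 \<and> b 0 = c \<and> (\<forall>t\<in>ball 0 r. (b t)^2 = poly (reflect_poly f) (a t))))"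

text \<open>A rational function on the curve, (A + B y)/Q, represented by a triple (A,B,Q), Q \<noteq> 0.
  A meromorphic q-differential is (A,B,Q) * (dx)^q.\<close>
type_synonym rfun = "complex poly \<times> complex poly \<times> complex poly"

fun rf_eval :: "rfun \<Rightarrow> complex \<Rightarrow> complex \<Rightarrow> complex" where
  "rf_eval (A, B, Q) x y = (poly A x + poly B x * y) / poly Q x"

definition rf_valid :: "rfun \<Rightarrow> bool" where
  "rf_valid \<omega> \<longleftrightarrow> snd (snd \<omega>) \<noteq> 0"

definition rf_nonzero :: "rfun \<Rightarrow> bool" where
  "rf_nonzero \<omega> \<longleftrightarrow> fst \<omega> \<noteq> 0 \<or> fst (snd \<omega>) \<noteq> 0"

definition local_expr :: "hpt \<Rightarrow> nat \<Rightarrow> rfun \<Rightarrow> (complex \<Rightarrow> complex) \<Rightarrow> (complex \<Rightarrow> complex) \<Rightarrow> complex \<Rightarrow> complex" where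
  "local_expr P q \<omega> a b t = (case P of
      Aff _ _ \<Rightarrow> rf_eval \<omega> (a t) (b t) * (deriv a t) ^ q
    | Inf _ \<Rightarrow> rf_eval \<omega> (1 / a t) (b t / (a t)^4) * (- deriv a t / (a t)^2) ^ q)"

definition ord_ge :: "(complex \<Rightarrow> complex) \<Rightarrow> int \<Rightarrow> bool" where
  "ord_ge h n \<longleftrightarrow> (\<exists>H r. r > 0 \<and> H holomorphic_on ball 0 r \<and> (\<forall>\<^sub>F t in at 0. h t = t powi n * H t))"

definition has_order :: "(complex \<Rightarrow> complex) \<Rightarrow> int \<Rightarrow> bool" where
  "has_order h n \<longleftrightarrow> ord_ge h n \<and> \<not> ord_ge h (n + 1)"

definition qdiff_ord :: "complex poly \<Rightarrow> nat \<Rightarrow> hpt \<Rightarrow> rfun \<Rightarrow> int \<Rightarrow> bool" where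
  "qdiff_ord f q P \<omega> n \<longleftrightarrow> (\<forall>a b. local_param f P a b \<longrightarrow> has_order (local_expr P q \<omega> a b) n)"

definition holo_qdiff :: "complex poly \<Rightarrow> nat \<Rightarrow> rfun \<Rightarrow> bool" where
  "holo_qdiff f q \<omega> \<longleftrightarrow> rf_valid \<omega> \<and>
     (\<forall>P a b. on_curve f P \<longrightarrow> local_param f P a b \<longrightarrow> ord_ge (local_expr P q \<omega> a b) 0)"

text \<open>q-gap sequence: the set {ord_P(\<psi>)+1 : \<psi> nonzero holomorphic q-differential}
  (= {n_1,...,n_{d_q}} for any basis with strictly increasing orders at P).\<close>
definition q_gaps :: "complex poly \<Rightarrow> nat \<Rightarrow> hpt \<Rightarrow> nat set" where
  "q_gaps f q P = {n. 1 \<le> n \<and> (\<exists>\<omega>. holo_qdiff f q \<omega> \<and> rf_nonzero \<omega> \<and> qdiff_ord f q P \<omega> (int n - 1))}"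

definition q_weight :: "complex poly \<Rightarrow> nat \<Rightarrow> hpt \<Rightarrow> int" where
  "q_weight f q P = (\<Sum>n\<in>q_gaps f q P. int n) - (\<Sum>i=1..card (q_gaps f q P). int i)"

definition q_weierstrass :: "complex poly \<Rightarrow> nat \<Rightarrow> hpt \<Rightarrow> bool" where
  "q_weierstrass f q P \<longleftrightarrow> q_weight f q P > 0"

definition taylor_poly :: "(complex \<Rightarrow> complex) \<Rightarrow> complex \<Rightarrow> nat \<Rightarrow> complex poly" where
  "taylor_poly Y w k = (\<Sum>j\<le>k. smult ((deriv ^^ j) Y w / fact j) ([:-w, 1:] ^ j))"

end

theory Submission
  imports Defs "HOL-Computational_Algebra.Fundamental_Theorem_Algebra"
    "HOL-Computational_Algebra.Polynomial_Factorial" "HOL-Computational_Algebra.Field_as_Ring"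
begin

text \<open>Every holomorphic 2-differential on \<open>y\<^sup>2 = f(x)\<close>, \<open>deg f = 8\<close>, has the form
  \<open>(p(x) + c y) / f(x) dx\<^sup>2\<close> with \<open>deg p \<le> 4\<close>: its parts even and odd in \<open>y\<close> are holomorphic
  separately; an even or odd part \<open>N y\<^sup>j / D dx\<^sup>2\<close> in lowest terms has no pole over a non-branch
  point, only simple zeros of \<open>D\<close> at branch points (where \<open>x - z\<close> vanishes to order 2), and the
  chart at infinity bounds the degree of the numerator.
  At \<open>P = (w, Y w)\<close> with \<open>f w \<noteq> 0\<close> the order of \<open>(p + c y)/f dx\<^sup>2\<close> is the order of \<open>p + c Y\<close>
  at \<open>w\<close>. For \<open>c = 0\<close> the powers \<open>(x - w)\<^sup>k\<close>, \<open>k \<le> 4\<close>, give the orders 0 to 4; for \<open>c \<noteq> 0\<close>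
  the order is either below 5 or that of \<open>Y - T\<^sub>4\<close>, which is \<open>n\<^sub>6 - 1 \<ge> 5\<close>.\<close>

section \<open>Orders of vanishing\<close>

lemma isCont_holomorphic_centre:
  assumes "H holomorphic_on ball c r" "r > 0" shows "isCont H c"
  using assms holomorphic_on_imp_continuous_on continuous_on_eq_continuous_at[OF open_ball]
  by (metis centre_in_ball)

lemma tendsto_holomorphic_centre:
  assumes "H holomorphic_on ball c r" "r > 0" shows "(H \<longlongrightarrow> H c) (at c)"
  using isCont_holomorphic_centre[OF assms] by (simp add: isCont_def)

lemma eventually_in_ball_at_0: "r > 0 \<Longrightarrow> \<forall>\<^sub>F t in at (0::complex). t \<in> ball 0 r"
  unfolding eventually_at by (rule exI[of _ r]) (simp add: dist_norm)

lemma ord_ge_0_intro: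
  assumes "\<rho> > 0" "H holomorphic_on ball 0 \<rho>" "\<forall>\<^sub>F t in at 0. h t = H t"
  shows "ord_ge h 0"
  unfolding ord_ge_def using assms by (intro exI[of _ H] exI[of _ \<rho>]) simp

lemma ord_ge_0_not_filterlim_at_infinity:
  assumes "ord_ge h 0" shows "\<not> filterlim h at_infinity (at 0)"
proof
  assume inf: "filterlim h at_infinity (at 0)"
  from assms obtain H r where r: "r > 0" and H: "H holomorphic_on ball 0 r"
    and ev: "\<forall>\<^sub>F t in at 0. h t = t powi 0 * H t" unfolding ord_ge_def by blast
  have "(H \<longlongrightarrow> H 0) (at 0)" using H r by (rule tendsto_holomorphic_centre)
  moreover have "\<forall>\<^sub>F t in at 0. H t = h t" using ev by (auto elim: eventually_mono)
  ultimately have "(h \<longlongrightarrow> H 0) (at 0)" by (simp add: tendsto_cong)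
  with inf show False using not_tendsto_and_filterlim_at_infinity[of "at (0::complex)"] by auto
qed

lemma ord_ge_0_add:
  assumes "ord_ge h 0" "ord_ge g 0" shows "ord_ge (\<lambda>t. h t + g t) 0"
proof -
  from assms(1) obtain H r where r: "r > 0" and H: "H holomorphic_on ball 0 r"
    and ev: "\<forall>\<^sub>F t in at 0. h t = t powi 0 * H t" unfolding ord_ge_def by blast
  from assms(2) obtain G s where s: "s > 0" and G: "G holomorphic_on ball 0 s"
    and ev2: "\<forall>\<^sub>F t in at 0. g t = t powi 0 * G t" unfolding ord_ge_def by blast
  have "(\<lambda>t. H t + G t) holomorphic_on ball 0 (min r s)"
    using holomorphic_on_subset[OF H, of "ball 0 (min r s)"] holomorphic_on_subset[OF G, of "ball 0 (min r s)"]
    by (intro holomorphic_intros) (auto simp: subset_ball)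
  moreover have "\<forall>\<^sub>F t in at 0. h t + g t = t powi 0 * (H t + G t)"
    using ev ev2 by eventually_elim simp
  ultimately show ?thesis unfolding ord_ge_def using r s
    by (intro exI[of _ "\<lambda>t. H t + G t"] exI[of _ "min r s"]) auto
qed

lemma ord_ge_0_cmult:
  assumes "ord_ge h 0" shows "ord_ge (\<lambda>t. c * h t) 0"
proof -
  from assms(1) obtain H r where r: "r > 0" and H: "H holomorphic_on ball 0 r"
    and ev: "\<forall>\<^sub>F t in at 0. h t = t powi 0 * H t" unfolding ord_ge_def by blast
  have "(\<lambda>t. c * H t) holomorphic_on ball 0 r" using H by (intro holomorphic_intros)
  moreover have "\<forall>\<^sub>F t in at 0. c * h t = t powi 0 * (c * H t)"
    using ev by eventually_elim simp
  ultimately show ?thesis unfolding ord_ge_def using r by blast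
qed

lemma ord_ge_mono:
  assumes "ord_ge h n" "m \<le> n" shows "ord_ge h m"
proof -
  from assms(1) obtain H r where r: "r > 0" and H: "H holomorphic_on ball 0 r"
    and ev: "\<forall>\<^sub>F t in at 0. h t = t powi n * H t" unfolding ord_ge_def by blast
  define k where "k = nat (n - m)"
  have nk: "n = m + int k" using assms(2) k_def by simp
  have "(\<lambda>t. t ^ k * H t) holomorphic_on ball 0 r" using H by (intro holomorphic_intros)
  moreover have "\<forall>\<^sub>F t in at 0. h t = t powi m * (t ^ k * H t)"
  proof -
    have "\<forall>\<^sub>F t in at (0::complex). t \<noteq> 0" by (simp add: eventually_at_filter)
    with ev show ?thesis
    proof eventually_elim
      case (elim t)
      then show ?case by (simp add: nk power_int_add)
    qed
  qed
  ultimately show ?thesis unfolding ord_ge_def using r by blast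
qed

lemma has_order_unique:
  assumes "has_order h n" "has_order h m" shows "n = m"
proof (rule ccontr)
  assume "n \<noteq> m"
  hence "n + 1 \<le> m \<or> m + 1 \<le> n" by linarith
  thus False using assms ord_ge_mono unfolding has_order_def by blast
qed

lemma has_order_intro:
  fixes n :: nat
  assumes r: "r > 0" and K: "K holomorphic_on ball 0 r" and K0: "K 0 \<noteq> 0"
    and ev: "\<forall>\<^sub>F t in at 0. h t = t ^ n * K t"
  shows "has_order h (int n)"
  unfolding has_order_def
proof
  show "ord_ge h (int n)" unfolding ord_ge_def
    by (rule exI[of _ K], rule exI[of _ r]) (simp add: r K ev power_int_of_nat)
  show "\<not> ord_ge h (int n + 1)"
  proof
    assume "ord_ge h (int n + 1)"
    then obtain H s where s: "s > 0" and H: "H holomorphic_on ball 0 s"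
      and ev2: "\<forall>\<^sub>F t in at 0. h t = t powi (int n + 1) * H t" unfolding ord_ge_def by blast
    have nz: "\<forall>\<^sub>F t in at (0::complex). t \<noteq> 0" by (simp add: eventually_at_filter)
    have "\<forall>\<^sub>F t in at 0. t * H t = K t" using ev ev2 nz
    proof eventually_elim
      case (elim t)
      have "t powi (int n + 1) = t ^ n * t"
        using power_int_of_nat[of t "Suc n"] by (simp add: add.commute)
      with elim show ?case by auto
    qed
    moreover have "isCont H 0" using H s by (rule isCont_holomorphic_centre)
    hence "((\<lambda>t. t * H t) \<longlongrightarrow> 0 * H 0) (at 0)"
      by (intro tendsto_intros) (auto simp: isCont_def)
    ultimately have "(K \<longlongrightarrow> 0) (at 0)" by (simp add: tendsto_cong)
    moreover have "(K \<longlongrightarrow> K 0) (at 0)" using K r by (rule tendsto_holomorphic_centre)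
    ultimately have "K 0 = 0" using tendsto_unique[of "at (0::complex)"] by auto
    with K0 show False by simp
  qed
qed

lemma has_order_comp_coordinate:
  fixes a G1 U h :: "complex \<Rightarrow> complex"
  assumes r0: "r0 > 0" "a holomorphic_on ball 0 r0" "a 0 = w" "deriv a 0 \<noteq> 0"
    and G1: "G1 holomorphic_on ball w \<rho>" "\<rho> > 0" "G1 w \<noteq> 0"
    and U: "U holomorphic_on ball 0 s" "s > 0" "U 0 \<noteq> 0"
    and ev: "\<forall>\<^sub>F t in at 0. h t = (a t - w) ^ n * G1 (a t) * U t"
  shows "has_order h (int n)"
proof -
  define \<alpha> where "\<alpha> t = (if t = 0 then deriv a 0 else (a t - a 0) / (t - 0))" for t
  have \<alpha>hol: "\<alpha> holomorphic_on ball 0 r0"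
    unfolding \<alpha>_def by (rule pole_lemma[OF r0(2)]) (simp add: r0(1))
  have aeq: "a t - w = t * \<alpha> t" for t
    using r0(3) by (cases "t = 0") (auto simp: \<alpha>_def)
  have "isCont a 0" by (rule isCont_holomorphic_centre[OF r0(2,1)])
  then obtain \<delta> where \<delta>: "\<delta> > 0" "\<And>t. dist t 0 < \<delta> \<Longrightarrow> dist (a t) (a 0) < \<rho>"
    unfolding continuous_at_eps_delta using G1(2) by blast
  define \<rho>1 where "\<rho>1 = min \<delta> (min r0 s)"
  have \<rho>1: "\<rho>1 > 0" using \<delta> r0 U by (simp add: \<rho>1_def)
  have sub1: "ball 0 \<rho>1 \<subseteq> ball 0 r0" "ball 0 \<rho>1 \<subseteq> ball 0 s" by (auto simp: \<rho>1_def)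
  have img: "a ` ball 0 \<rho>1 \<subseteq> ball w \<rho>"
  proof
    fix y assume "y \<in> a ` ball 0 \<rho>1"
    then obtain t where t: "t \<in> ball 0 \<rho>1" "y = a t" by blast
    have "dist t 0 < \<delta>" using t(1) by (simp add: \<rho>1_def dist_commute)
    hence "dist (a t) w < \<rho>" using \<delta>(2) r0(3) by auto
    thus "y \<in> ball w \<rho>" using t(2) by (simp add: dist_commute)
  qed
  define K where "K t = \<alpha> t ^ n * G1 (a t) * U t" for t
  have "(G1 \<circ> a) holomorphic_on ball 0 \<rho>1"
    by (rule holomorphic_on_compose_gen[OF holomorphic_on_subset[OF r0(2) sub1(1)] G1(1) img])
  hence Khol: "K holomorphic_on ball 0 \<rho>1" unfolding K_def
    using holomorphic_on_subset[OF \<alpha>hol sub1(1)] holomorphic_on_subset[OF U(1) sub1(2)]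
    by (intro holomorphic_intros) (auto simp: o_def)
  have K0: "K 0 \<noteq> 0" using r0(3,4) G1(3) U(3) by (simp add: K_def \<alpha>_def)
  have "\<forall>\<^sub>F t in at 0. h t = t ^ n * K t" using ev
  proof eventually_elim
    case (elim t)
    thus ?case by (simp add: K_def aeq power_mult_distrib)
  qed
  thus ?thesis by (rule has_order_intro[OF \<rho>1 Khol K0])
qed

lemma eventually_coordinate_ne:
  assumes "a holomorphic_on ball 0 r" "r > 0" "deriv a 0 \<noteq> 0"
  shows "\<forall>\<^sub>F t in at 0. a t \<noteq> a 0"
proof -
  obtain \<epsilon> where \<epsilon>: "\<epsilon> > 0" "inj_on a (ball 0 \<epsilon>)"
    using has_complex_derivative_locally_injective[OF assms(1) _ open_ball assms(3)] assms(2) by auto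
  have "\<forall>\<^sub>F t in at (0::complex). t \<noteq> 0" by (simp add: eventually_at_filter)
  with eventually_in_ball_at_0[OF \<epsilon>(1)] show ?thesis
    by eventually_elim (use \<epsilon> in \<open>auto simp: inj_on_def\<close>)
qed

lemma filterlim_at_infinity_pole:
  fixes K h :: "complex \<Rightarrow> complex"
  assumes K: "(K \<longlongrightarrow> K0) (at 0)" "K0 \<noteq> 0" and e: "e \<ge> 1"
    and ev: "\<forall>\<^sub>F t in at 0. h t = K t / t ^ e"
  shows "filterlim h at_infinity (at 0)"
proof -
  have "((\<lambda>t::complex. t ^ e) \<longlongrightarrow> 0 ^ e) (at 0)" by (intro tendsto_intros)
  moreover have "(0::complex) ^ e = 0" using e by (simp add: power_0_left)
  ultimately have t1: "((\<lambda>t::complex. t ^ e) \<longlongrightarrow> 0) (at 0)" by simp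
  have "\<forall>\<^sub>F t in at (0::complex). t \<noteq> 0" by (simp add: eventually_at_filter)
  hence "\<forall>\<^sub>F t in at (0::complex). t ^ e \<noteq> 0" by (rule eventually_mono) simp
  hence "filterlim (\<lambda>t::complex. t ^ e) (at 0) (at 0)" using t1 by (intro filterlim_atI) auto
  hence lim: "filterlim (\<lambda>t. K t / t ^ e) at_infinity (at 0)"
    by (rule filterlim_divide_at_infinity[OF K(1) _ K(2)])
  have ev': "\<forall>\<^sub>F t in at 0. K t / t ^ e = h t" using ev by (rule eventually_mono) simp
  show ?thesis using filterlim_cong[OF refl refl ev', of at_infinity] lim by simp
qed

lemma eventually_poly_comp_nonzero:
  fixes p :: "complex poly"
  assumes "p \<noteq> 0" "(a \<longlongrightarrow> z) F" "\<forall>\<^sub>F t in F. a t \<noteq> z"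
  shows "\<forall>\<^sub>F t in F. poly p (a t) \<noteq> 0"
proof -
  obtain q where q: "p = [:-z,1:] ^ order z p * q" and nd: "\<not> [:-z,1:] dvd q"
    using order_decomp[OF assms(1)] by blast
  have qz: "poly q z \<noteq> 0" using nd by (simp add: poly_eq_0_iff_dvd)
  have "((\<lambda>t. poly q (a t)) \<longlongrightarrow> poly q z) F" using assms(2) by (rule tendsto_poly)
  hence "\<forall>\<^sub>F t in F. poly q (a t) \<noteq> 0" using qz by (rule tendsto_imp_eventually_ne)
  with assms(3) show ?thesis
  proof eventually_elim
    case (elim t)
    have "poly p (a t) = (a t - z) ^ order z p * poly q (a t)"
      by (subst q) (simp add: poly_power)
    with elim show ?case by simp
  qed
qed

lemma dvd_if_roots_simple:
  fixes Q f :: "complex poly"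
  assumes "Q \<noteq> 0" "f \<noteq> 0" "\<forall>z. poly Q z = 0 \<longrightarrow> poly f z = 0 \<and> order z Q \<le> 1"
  shows "Q dvd f"
  using assms
proof (induction "degree Q" arbitrary: Q f rule: less_induct)
  case less
  show ?case
  proof (cases "degree Q = 0")
    case True
    hence "is_unit Q" using less.prems(1) is_unit_iff_degree by blast
    thus ?thesis by (rule unit_imp_dvd)
  next
    case False
    then obtain z where z: "poly Q z = 0"
      using fundamental_theorem_of_algebra[of Q] constant_degree[of Q] False by blast
    obtain Q' where Q': "Q = [:-z,1:] * Q'" using z by (metis dvdE poly_eq_0_iff_dvd)
    have fz: "poly f z = 0" using less.prems(3) z by blast
    obtain f' where f': "f = [:-z,1:] * f'" using fz by (metis dvdE poly_eq_0_iff_dvd)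
    have Q'nz: "Q' \<noteq> 0" using Q' less.prems(1) by auto
    have f'nz: "f' \<noteq> 0" using f' less.prems(2) by auto
    have degQ': "degree Q' < degree Q" proof -
      have "degree Q = degree [:-z,1::complex:] + degree Q'"
        using Q' Q'nz by (metis degree_mult_eq pCons_eq_0_iff zero_neq_one)
      thus ?thesis by simp
    qed
    have ordz: "order z Q = Suc (order z Q')"
    proof -
      have "order z Q = order z [:-z,1:] + order z Q'"
        using Q' less.prems(1) order_mult by metis
      moreover have "order z [:-z,1::complex:] = 1" using order_power_n_n[of z 1] by simp
      ultimately show ?thesis by simp
    qed
    hence "order z Q' = 0" using less.prems(3) z by auto
    hence Q'z: "poly Q' z \<noteq> 0" using Q'nz order_root by blast
    have "\<forall>y. poly Q' y = 0 \<longrightarrow> poly f' y = 0 \<and> order y Q' \<le> 1"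
    proof (intro allI impI)
      fix y assume y: "poly Q' y = 0"
      hence yz: "y \<noteq> z" using Q'z by auto
      have "poly Q y = 0" using y Q' by simp
      hence fy: "poly f y = 0" "order y Q \<le> 1" using less.prems(3) by auto
      have "poly f' y = 0" using fy(1) f' yz by simp
      moreover have "order y Q' \<le> order y Q"
        using less.prems(1) Q' dvd_imp_order_le[of Q Q' y] dvd_triv_right[of Q' "[:-z,1:]"] by argo
      ultimately show "poly f' y = 0 \<and> order y Q' \<le> 1" using fy(2) by simp
    qed
    hence "Q' dvd f'" using less.hyps[OF degQ' Q'nz f'nz] by blast
    thus ?thesis unfolding Q' f' by (rule mult_dvd_mono[OF dvd_refl])
  qed
qed

lemma separable_poly_pderiv_nonzero:
  fixes f :: "complex poly"
  assumes "separable_poly f" "poly f z = 0" shows "poly (pderiv f) z \<noteq> 0"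
proof
  assume d: "poly (pderiv f) z = 0"
  have "is_unit [:-z,1:]"
    using assms(1) unfolding separable_poly_def
    by (rule coprime_common_divisor) (use assms(2) d in \<open>auto simp: poly_eq_0_iff_dvd\<close>)
  thus False by (simp add: is_unit_iff_degree)
qed

lemma separable_square_degree_0:
  fixes f T :: "complex poly"
  assumes "separable_poly f" "f = T ^ 2" shows "degree f = 0"
proof -
  have "pderiv f = T * pderiv T + T * pderiv T" using assms(2)
    by (simp add: power2_eq_square pderiv_mult)
  hence "T dvd pderiv f" by simp
  moreover have "T dvd f" using assms(2) by (simp add: power2_eq_square)
  ultimately have "is_unit T" using assms(1) unfolding separable_poly_def
    using coprime_common_divisor by blast
  hence "degree T = 0" using is_unit_iff_degree[of T] by (metis degree_0)
  thus ?thesis using assms(2) degree_power_le[of T 2] by simp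
qed

lemma poly_pderiv_linear_factor: "poly (pderiv ([:-z,1:] * p)) z = poly p (z::complex)"
proof -
  have "pderiv ([:-z,1:] * p) = [:-z,1:] * pderiv p + p * pderiv [:-z,1:]" by (simp only: pderiv_mult)
  moreover have "pderiv [:-z,1::complex:] = 1" by (simp add: pderiv_pCons)
  ultimately show ?thesis by simp
qed

lemma poly_eq_if_eq_on_ball:
  fixes p q :: "complex poly"
  assumes "r > 0" "\<forall>x\<in>ball w r. poly p x = poly q x" shows "p = q"
proof (rule ccontr)
  assume "p \<noteq> q"
  hence "p - q \<noteq> 0" by simp
  hence fin: "finite {x. poly (p - q) x = 0}" by (rule poly_roots_finite)
  have sub: "(\<lambda>s. w + complex_of_real s) ` {0<..<r} \<subseteq> {x. poly (p - q) x = 0}"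
    using assms(2) by (auto simp: dist_norm)
  have "inj_on (\<lambda>s. w + complex_of_real s) {0<..<r}" by (auto simp: inj_on_def)
  hence "infinite ((\<lambda>s. w + complex_of_real s) ` {0<..<r})"
    using assms(1) finite_imageD infinite_Ioo_iff by blast
  with fin sub show False using finite_subset by blast
qed

lemma poly_inverse_eq_reflect:
  fixes p :: "complex poly"
  assumes "t \<noteq> 0" shows "poly p (1 / t) = poly (reflect_poly p) t / t ^ degree p"
  using poly_reflect_poly_nz[OF assms, of p] assms by (simp add: field_simps)

lemma poly_inverse_eq_reflect_4:
  fixes p :: "complex poly"
  assumes "degree p \<le> 4" "x \<noteq> 0"
  shows "poly p (1 / x) = poly (reflect_poly p * monom 1 (4 - degree p)) x / x ^ 4"
proof -
  have "poly p (1 / x) = poly (reflect_poly p) x / x ^ degree p" by (rule poly_inverse_eq_reflect[OF assms(2)])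
  moreover have "x ^ 4 = x ^ degree p * x ^ (4 - degree p)"
    using assms(1) by (simp add: power_add[symmetric])
  ultimately show ?thesis using assms(2) by (simp add: poly_monom field_simps)
qed

lemma poly_factor_at:
  fixes p :: "complex poly"
  assumes "p \<noteq> 0"
  obtains k q where "k \<le> degree p" "poly q w \<noteq> 0" "\<And>x. poly p x = (x - w) ^ k * poly q x"
proof -
  obtain q where q: "p = [:-w,1:] ^ order w p * q" "\<not> [:-w,1:] dvd q"
    using order_decomp[OF assms] by blast
  have "poly q w \<noteq> 0" using q(2) by (simp add: poly_eq_0_iff_dvd)
  moreover have "poly p x = (x - w) ^ order w p * poly q x" for x by (subst q(1)) (simp add: poly_power)
  ultimately show ?thesis using that order_degree[OF assms] by blast
qed

lemma poly_ratio_eq: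
  fixes A B Q f p :: "complex poly"
  assumes "A * f = p * Q" "B * f = smult c Q" "poly Q x \<noteq> 0" "poly f x \<noteq> 0"
  shows "(poly A x + poly B x * y) / poly Q x = (poly p x + c * y) / poly f x"
proof -
  have 1: "poly A x * poly f x = poly p x * poly Q x" using arg_cong[OF assms(1), of "\<lambda>q. poly q x"] by simp
  have 2: "poly B x * poly f x = c * poly Q x" using arg_cong[OF assms(2), of "\<lambda>q. poly q x"] by simp
  have "(poly A x + poly B x * y) * poly f x = (poly p x + c * y) * poly Q x"
    using 1 2 by (simp add: algebra_simps)
  thus ?thesis using assms(3,4) by (simp add: field_simps)
qed

lemma reduce_fraction:
  fixes N D :: "complex poly"
  assumes "D \<noteq> 0"
  obtains N1 D1 g where "N = N1 * g" "D = D1 * g" "coprime N1 D1" "D1 \<noteq> 0" "g \<noteq> 0"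
proof -
  define g where "g = gcd N D"
  have g: "g \<noteq> 0" using assms by (simp add: g_def)
  have "N = N div g * g" by (simp add: g_def)
  moreover have "D = D div g * g" by (simp add: g_def)
  moreover have "coprime (N div g) (D div g)" unfolding g_def using assms by (intro div_gcd_coprime) auto
  moreover have "D div g \<noteq> 0" using assms \<open>D = D div g * g\<close> by (metis mult_zero_left)
  ultimately show ?thesis using that g by blast
qed

lemma coprime_poly_nonzero_at_root:
  fixes N1 D1 :: "complex poly"
  assumes "coprime N1 D1" "poly D1 z = 0" shows "poly N1 z \<noteq> 0"
proof
  assume "poly N1 z = 0"
  hence "is_unit [:-z,1:]" using assms
    by (intro coprime_common_divisor[OF assms(1)]) (auto simp: poly_eq_0_iff_dvd)
  thus False by (simp add: is_unit_iff_degree)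
qed

lemma deriv_poly [simp]: "deriv (poly p) x = poly (pderiv p) (x::complex)"
  by (rule DERIV_imp_deriv) simp

lemma deriv_translate [simp]: "deriv (\<lambda>t. z + t) t = (1::complex)"
  by (rule DERIV_imp_deriv) (auto intro!: derivative_eq_intros)

lemma holomorphic_on_ball_DERIV:
  assumes "f holomorphic_on ball c r" "t \<in> ball c r"
  shows "(f has_field_derivative deriv f t) (at t)"
  using holomorphic_derivI[OF assms(1) open_ball assms(2)] by simp

lemma deriv_square_eq_poly_comp:
  fixes F :: "complex poly"
  assumes a: "a holomorphic_on ball 0 r" and b: "b holomorphic_on ball 0 r"
    and eq: "\<forall>t\<in>ball 0 r. b t ^ 2 = poly F (a t)" and t: "t \<in> ball 0 r"
  shows "2 * b t * deriv b t = poly (pderiv F) (a t) * deriv a t"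
proof -
  have D1: "((\<lambda>t. b t ^ 2) has_field_derivative (2 * b t * deriv b t)) (at t)"
    using DERIV_power[OF holomorphic_on_ball_DERIV[OF b t], of 2] by (simp add: algebra_simps)
  have D1': "((\<lambda>t. poly F (a t)) has_field_derivative (2 * b t * deriv b t)) (at t)"
    by (rule has_field_derivative_transform_within_open[OF D1 open_ball t]) (use eq in auto)
  have D2: "((\<lambda>t. poly F (a t)) has_field_derivative poly (pderiv F) (a t) * deriv a t) (at t)"
    by (rule DERIV_chain2[OF poly_DERIV holomorphic_on_ball_DERIV[OF a t]])
  from DERIV_unique[OF D1' D2] show ?thesis by simp
qed

lemma deriv_0_if_vanishing:
  assumes "b holomorphic_on ball 0 r" "r > 0" "\<forall>t\<in>ball 0 r. b t = 0"
  shows "deriv b 0 = 0"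
proof -
  have "deriv b 0 = deriv (\<lambda>_. 0::complex) 0"
    by (rule complex_derivative_transform_within_open[OF assms(1) _ open_ball]) (use assms in auto)
  thus ?thesis by simp
qed

lemma eventually_nonzero_at_0:
  fixes b :: "complex \<Rightarrow> complex"
  assumes b: "b holomorphic_on ball 0 r" and r: "r > 0" and beta: "\<beta> \<in> ball 0 r" "b \<beta> \<noteq> 0"
  shows "\<forall>\<^sub>F t in at 0. b t \<noteq> 0"
proof (cases "b 0 = 0")
  case False
  show ?thesis using tendsto_imp_eventually_ne[OF tendsto_holomorphic_centre[OF b r] False] .
next
  case True
  have c0: "(0::complex) \<in> ball 0 r" using r by simp
  obtain r' where r': "0 < r'" "\<And>z. z \<in> ball 0 r' - {0} \<Longrightarrow> b z \<noteq> 0"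
    using isolated_zeros[OF b open_ball connected_ball c0 True beta] by blast
  have "\<forall>x. x \<noteq> 0 \<and> dist x 0 < r' \<longrightarrow> b x \<noteq> 0"
    using r'(2) by (simp add: dist_commute)
  thus ?thesis unfolding eventually_at using r'(1) by blast
qed

lemma tendsto_comp_square:
  assumes "\<phi> holomorphic_on ball 0 \<epsilon>" "\<epsilon> > 0"
  shows "((\<lambda>t. \<phi> (t^2)) \<longlongrightarrow> \<phi> 0) (at (0::complex))"
proof -
  have "((\<lambda>t::complex. t^2) \<longlongrightarrow> 0) (at 0)" by (intro tendsto_eq_intros) auto
  thus ?thesis using isCont_tendsto_compose[OF isCont_holomorphic_centre[OF assms]] by blast
qed

lemma holomorphic_sqrt_branch:
  fixes g :: "complex \<Rightarrow> complex"
  assumes g: "g holomorphic_on ball 0 r" and r: "r > 0" and c: "c^2 = g 0" "c \<noteq> 0"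
  obtains \<rho> s where "0 < \<rho>" "\<rho> \<le> r" "s holomorphic_on ball 0 \<rho>" "s 0 = c"
    "\<And>t. t \<in> ball 0 \<rho> \<Longrightarrow> (s t)^2 = g t"
proof -
  have g0: "g 0 \<noteq> 0" using c by (metis power_eq_0_iff zero_neq_numeral)
  have "isCont g 0" by (rule isCont_holomorphic_centre[OF g r])
  then obtain d where d: "d > 0" "\<And>x. dist x 0 < d \<Longrightarrow> dist (g x) (g 0) < cmod (g 0)"
    unfolding continuous_at_eps_delta using g0 by (meson zero_less_norm_iff)
  define \<rho> where "\<rho> = min d r"
  define s where "s t = c * csqrt (g t / c^2)" for t
  have notneg: "g t / c^2 \<notin> \<real>\<^sub>\<le>\<^sub>0" if "t \<in> ball 0 \<rho>" for t
  proof -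
    have "dist (g t) (g 0) < cmod (g 0)" using d(2)[of t] that by (auto simp: \<rho>_def dist_commute)
    hence "cmod (g t / g 0 - 1) < 1" using g0
    proof -
      have "g t / g 0 - 1 = (g t - g 0) / g 0" using g0 by (simp add: field_simps)
      moreover have "cmod ((g t - g 0) / g 0) < 1" using \<open>dist (g t) (g 0) < cmod (g 0)\<close> g0
        by (simp add: dist_norm norm_divide divide_less_eq)
      ultimately show ?thesis by simp
    qed
    hence "Re (g t / g 0) > 0"
      using abs_Re_le_cmod[of "g t / g 0 - 1"] by auto
    thus ?thesis using c by (auto simp: complex_nonpos_Reals_iff)
  qed
  show ?thesis
  proof
    show "0 < \<rho>" "\<rho> \<le> r" using d r by (auto simp: \<rho>_def)
    have "g holomorphic_on ball 0 \<rho>" using g by (rule holomorphic_on_subset) (auto simp: \<rho>_def)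
    thus "s holomorphic_on ball 0 \<rho>" unfolding s_def using notneg c
      by (intro holomorphic_intros) auto
    show "s 0 = c" using c g0 by (simp add: s_def)
    show "(s t)^2 = g t" if "t \<in> ball 0 \<rho>" for t
      using c g0 by (simp add: s_def power_mult_distrib)
  qed
qed

lemma poly_local_inverse:
  fixes f :: "complex poly"
  assumes "poly f z = 0" "poly (pderiv f) z \<noteq> 0"
  obtains \<epsilon> \<phi> where "\<epsilon> > 0" "\<phi> holomorphic_on ball 0 \<epsilon>" "\<phi> 0 = z"
    "\<And>s. s \<in> ball 0 \<epsilon> \<Longrightarrow> poly f (\<phi> s) = s" "deriv \<phi> 0 \<noteq> 0"
proof -
  have hol: "poly f holomorphic_on UNIV"
    using poly_holomorphic_on[of "\<lambda>x. x" UNIV f] by simp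
  obtain r where r: "r > 0" "inj_on (poly f) (ball z r)"
    using has_complex_derivative_locally_injective[OF hol _ open_UNIV, of z] assms(2) by auto
  have hol2: "poly f holomorphic_on ball z r" using hol by (rule holomorphic_on_subset) auto
  obtain g where g: "g holomorphic_on (poly f ` ball z r)"
    "\<And>x. x \<in> ball z r \<Longrightarrow> deriv (poly f) x * deriv g (poly f x) = 1"
    "\<And>x. x \<in> ball z r \<Longrightarrow> g (poly f x) = x"
    using holomorphic_has_inverse[OF hol2 open_ball r(2)] by metis
  have op: "open (poly f ` ball z r)" by (rule open_mapping_thm3[OF hol2 open_ball r(2)])
  have "0 \<in> poly f ` ball z r" using assms(1) r(1) by (metis centre_in_ball imageI)
  then obtain \<epsilon> where e: "\<epsilon> > 0" "ball 0 \<epsilon> \<subseteq> poly f ` ball z r"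
    using op openE by blast
  show ?thesis
  proof
    show "\<epsilon> > 0" by fact
    show "g holomorphic_on ball 0 \<epsilon>" using g(1) e(2) by (rule holomorphic_on_subset)
    show "g 0 = z" using g(3)[of z] assms(1) r(1) by simp
    show "poly f (g s) = s" if s: "s \<in> ball 0 \<epsilon>" for s
    proof -
      obtain x where "x \<in> ball z r" "s = poly f x" using s e(2) by blast
      thus ?thesis using g(3) by simp
    qed
    show "deriv g 0 \<noteq> 0" using g(2)[of z] assms r(1) by auto
  qed
qed

section \<open>Local parameters of the curve\<close>

lemma local_param_nonbranch:
  fixes f :: "complex poly"
  assumes fz: "poly f z \<noteq> 0"
  obtains \<rho> s c where "\<rho> > 0" "s holomorphic_on ball 0 \<rho>" "s 0 = c" "c \<noteq> 0" "c^2 = poly f z"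
    "local_param f (Aff z c) (\<lambda>t. z + t) s"
proof -
  define c where "c = csqrt (poly f z)"
  have c: "c^2 = poly f z" "c \<noteq> 0" using fz by (auto simp: c_def)
  have hol: "(\<lambda>t. poly f (z + t)) holomorphic_on ball 0 1"
    by (intro poly_holomorphic_on holomorphic_intros)
  obtain \<rho> s where s: "0 < \<rho>" "\<rho> \<le> 1" "s holomorphic_on ball 0 \<rho>" "s 0 = c"
      "\<And>t. t \<in> ball 0 \<rho> \<Longrightarrow> (s t)^2 = poly f (z + t)"
    by (rule holomorphic_sqrt_branch[OF hol zero_less_one _ c(2)]) (use c in auto)
  have "local_param f (Aff z c) (\<lambda>t. z + t) s"
    unfolding local_param_def
    by (rule exI[of _ \<rho>]) (use s in \<open>auto intro!: holomorphic_intros\<close>)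
  thus ?thesis using that s c by blast
qed

lemma local_param_Inf:
  fixes f :: "complex poly"
  assumes deg: "degree f = 8"
  obtains \<rho> s c where "\<rho> > 0" "s holomorphic_on ball 0 \<rho>" "s 0 = c" "c \<noteq> 0" "c^2 = lead_coeff f"
    "local_param f (Inf c) (\<lambda>t. t) s"
proof -
  define c where "c = csqrt (lead_coeff f)"
  have fnz: "f \<noteq> 0" using deg by auto
  have c: "c^2 = lead_coeff f" "c \<noteq> 0" using fnz by (auto simp: c_def)
  have hol: "(\<lambda>t. poly (reflect_poly f) t) holomorphic_on ball 0 1"
    by (intro poly_holomorphic_on holomorphic_intros)
  have r0: "poly (reflect_poly f) 0 = lead_coeff f" by (simp add: poly_0_coeff_0)
  obtain \<rho> s where s: "0 < \<rho>" "\<rho> \<le> 1" "s holomorphic_on ball 0 \<rho>" "s 0 = c"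
      "\<And>t. t \<in> ball 0 \<rho> \<Longrightarrow> (s t)^2 = poly (reflect_poly f) t"
    by (rule holomorphic_sqrt_branch[OF hol zero_less_one _ c(2)]) (use c r0 in auto)
  have "local_param f (Inf c) (\<lambda>t. t) s"
    unfolding local_param_def
    by (rule exI[of _ \<rho>]) (use s in \<open>auto intro!: holomorphic_intros\<close>)
  thus ?thesis using that s c by blast
qed

lemma local_param_branch:
  fixes f :: "complex poly"
  assumes fz: "poly f z = 0" and fd: "poly (pderiv f) z \<noteq> 0"
  obtains \<rho> \<epsilon> \<phi> where "\<rho> > 0" "\<epsilon> > 0" "\<phi> holomorphic_on ball 0 \<epsilon>" "\<phi> 0 = z"
    "\<And>s. s \<in> ball 0 \<epsilon> \<Longrightarrow> poly f (\<phi> s) = s" "deriv \<phi> 0 \<noteq> 0"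
    "\<And>t::complex. t \<in> ball 0 \<rho> \<Longrightarrow> t^2 \<in> ball 0 \<epsilon>"
    "\<And>t. t \<in> ball 0 \<rho> \<Longrightarrow> deriv (\<lambda>t. \<phi> (t^2)) t = 2 * t * deriv \<phi> (t^2)"
    "local_param f (Aff z 0) (\<lambda>t. \<phi> (t^2)) (\<lambda>t. t)"
proof -
  obtain \<epsilon> \<phi> where e: "\<epsilon> > 0" "\<phi> holomorphic_on ball 0 \<epsilon>" "\<phi> 0 = z"
    "\<And>s. s \<in> ball 0 \<epsilon> \<Longrightarrow> poly f (\<phi> s) = s" "deriv \<phi> 0 \<noteq> 0"
    by (rule poly_local_inverse[OF fz fd]) (rule that, assumption+)
  define \<rho> where "\<rho> = min 1 \<epsilon>"
  have \<rho>: "\<rho> > 0" using e by (simp add: \<rho>_def)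
  have sq: "t^2 \<in> ball 0 \<epsilon>" if "t \<in> ball 0 \<rho>" for t :: complex
  proof -
    have n: "norm t < 1" "norm t < \<epsilon>" using that by (auto simp: \<rho>_def)
    have "norm (t^2) = norm t * norm t" by (simp add: norm_mult power2_eq_square)
    also have "\<dots> \<le> norm t * 1" using n(1) by (intro mult_left_mono) auto
    also have "\<dots> < \<epsilon>" using n(2) by simp
    finally show ?thesis by simp
  qed
  have img: "(\<lambda>t::complex. t^2) ` ball 0 \<rho> \<subseteq> ball 0 \<epsilon>"  by (rule image_subsetI, rule sq)
  have ahol: "(\<lambda>t. \<phi> (t^2)) holomorphic_on ball 0 \<rho>"
  proof -
    have "(\<lambda>t::complex. t^2) holomorphic_on ball 0 \<rho>" by (intro holomorphic_intros)
    from holomorphic_on_compose_gen[OF this e(2) img] show ?thesis by (simp add: o_def)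
  qed
  have da: "deriv (\<lambda>t. \<phi> (t^2)) t = 2 * t * deriv \<phi> (t^2)" if "t \<in> ball 0 \<rho>" for t
  proof -
    have d1: "(\<phi> has_field_derivative deriv \<phi> (t^2)) (at (t^2))"
      by (rule holomorphic_on_ball_DERIV[OF e(2) sq[OF that]])
    have d2: "((\<lambda>t. t^2) has_field_derivative 2 * t) (at t)"
      by (auto intro!: derivative_eq_intros)
    have "((\<lambda>t. \<phi> (t^2)) has_field_derivative deriv \<phi> (t^2) * (2 * t)) (at t)"
      by (rule DERIV_chain2[OF d1 d2])
    thus ?thesis by (auto dest!: DERIV_imp_deriv simp: algebra_simps)
  qed
  have eqs: "\<forall>t\<in>ball 0 \<rho>. t ^ 2 = poly f (\<phi> (t^2))" using e(4) sq by metis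
  have "(\<lambda>t::complex. t) holomorphic_on ball 0 \<rho>" by (intro holomorphic_intros)
  hence lp: "local_param f (Aff z 0) (\<lambda>t. \<phi> (t^2)) (\<lambda>t. t)"
    unfolding local_param_def using \<rho> ahol e(3) eqs by (intro exI[of _ \<rho>]) simp
  show ?thesis using that[OF \<rho> e(1,2,3,4,5) sq da lp] by simp
qed

text \<open>At a branch point differentiating \<open>b\<^sup>2 = f(a)\<close> gives \<open>a' = 2 b b' / f'(a)\<close>, so \<open>a' / b\<close>
  stays holomorphic.\<close>
lemma local_param_deriv_factor:
  fixes f :: "complex poly"
  assumes sep: "separable_poly f" and y0: "y0^2 = poly f z"
    and r0: "r0 > 0" "a holomorphic_on ball 0 r0" "b holomorphic_on ball 0 r0"
      "deriv a 0 \<noteq> 0 \<or> deriv b 0 \<noteq> 0" "a 0 = z" "b 0 = y0" "\<forall>t\<in>ball 0 r0. (b t)^2 = poly f (a t)"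
  obtains \<rho> K where "\<rho> > 0" "\<rho> \<le> r0" "K holomorphic_on ball 0 \<rho>"
    "\<And>t. t \<in> ball 0 \<rho> \<Longrightarrow> deriv a t = b t * K t" "\<forall>\<^sub>F t in at 0. b t \<noteq> 0"
proof (cases "y0 = 0")
  case False
  have "isCont b 0" by (rule isCont_holomorphic_centre[OF r0(3,1)])
  then obtain \<delta> where \<delta>: "\<delta> > 0" "\<And>t. dist 0 t < \<delta> \<Longrightarrow> b t \<noteq> 0"
    using continuous_at_avoid[of 0 b 0] r0(6) False by auto
  define \<rho> where "\<rho> = min \<delta> r0"
  have sub: "ball 0 \<rho> \<subseteq> ball 0 r0" by (auto simp: \<rho>_def)
  have bnz: "b t \<noteq> 0" if "t \<in> ball 0 \<rho>" for t using \<delta>(2)[of t] that by (auto simp: \<rho>_def)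
  show ?thesis
  proof
    show "\<rho> > 0" "\<rho> \<le> r0" using \<delta> r0 by (auto simp: \<rho>_def)
    have "deriv a holomorphic_on ball 0 \<rho>"
      using holomorphic_deriv[OF r0(2) open_ball] sub by (rule holomorphic_on_subset)
    thus "(\<lambda>t. deriv a t / b t) holomorphic_on ball 0 \<rho>"
      using holomorphic_on_subset[OF r0(3) sub] holomorphic_on_subset[OF r0(2) sub] bnz
      by (intro holomorphic_intros) auto
    show "deriv a t = b t * (deriv a t / b t)" if "t \<in> ball 0 \<rho>" for t using bnz[OF that] by simp
    show "\<forall>\<^sub>F t in at 0. b t \<noteq> 0"
      using eventually_in_ball_at_0[of \<rho>] \<delta> r0 by (auto simp: \<rho>_def elim!: eventually_mono intro: bnz)
  qed
next
  case True
  have fz: "poly f z = 0" using y0 True by simp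
  have fd: "poly (pderiv f) z \<noteq> 0" by (rule separable_poly_pderiv_nonzero[OF sep fz])
  have "isCont a 0" by (rule isCont_holomorphic_centre[OF r0(2,1)])
  hence "isCont (\<lambda>t. poly (pderiv f) (a t)) 0" by (intro continuous_intros)
  then obtain \<delta> where \<delta>: "\<delta> > 0" "\<And>t. dist 0 t < \<delta> \<Longrightarrow> poly (pderiv f) (a t) \<noteq> 0"
    using continuous_at_avoid[of 0 "\<lambda>t. poly (pderiv f) (a t)" 0] r0(5) fd by auto
  define \<rho> where "\<rho> = min \<delta> r0"
  have sub: "ball 0 \<rho> \<subseteq> ball 0 r0" by (auto simp: \<rho>_def)
  have dnz: "poly (pderiv f) (a t) \<noteq> 0" if "t \<in> ball 0 \<rho>" for t using \<delta>(2)[of t] that by (auto simp: \<rho>_def)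
  have did: "2 * b t * deriv b t = poly (pderiv f) (a t) * deriv a t" if "t \<in> ball 0 r0" for t
    by (rule deriv_square_eq_poly_comp[OF r0(2,3,7) that])
  have evb: "\<forall>\<^sub>F t in at 0. b t \<noteq> 0"
  proof -
    have "\<exists>\<beta>\<in>ball 0 r0. b \<beta> \<noteq> 0"
    proof (rule ccontr)
      assume "\<not> ?thesis"
      hence b0: "\<forall>t\<in>ball 0 r0. b t = 0" by auto
      hence db: "deriv b 0 = 0" by (rule deriv_0_if_vanishing[OF r0(3,1)])
      have "poly (pderiv f) (a 0) * deriv a 0 = 0" using did[of 0] r0(1) b0 by simp
      hence "deriv a 0 = 0" using fd r0(5) by simp
      thus False using db r0(4) by simp
    qed
    then obtain \<beta> where "\<beta> \<in> ball 0 r0" "b \<beta> \<noteq> 0" by blast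
    thus ?thesis by (rule eventually_nonzero_at_0[OF r0(3,1)])
  qed
  show ?thesis
  proof
    show "\<rho> > 0" "\<rho> \<le> r0" using \<delta> r0 by (auto simp: \<rho>_def)
    have "deriv b holomorphic_on ball 0 \<rho>"
      using holomorphic_deriv[OF r0(3) open_ball] sub by (rule holomorphic_on_subset)
    moreover have "(\<lambda>t. poly (pderiv f) (a t)) holomorphic_on ball 0 \<rho>"
      by (rule poly_holomorphic_on[OF holomorphic_on_subset[OF r0(2) sub]])
    ultimately show "(\<lambda>t. 2 * deriv b t / poly (pderiv f) (a t)) holomorphic_on ball 0 \<rho>"
      using dnz holomorphic_on_subset[OF r0(3) sub] holomorphic_on_subset[OF r0(2) sub]
      by (intro holomorphic_intros) auto
    show "deriv a t = b t * (2 * deriv b t / poly (pderiv f) (a t))" if "t \<in> ball 0 \<rho>" for t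
    proof -
      have "t \<in> ball 0 r0" using that sub by blast
      thus ?thesis using did[of t] dnz[OF that] by (auto simp: field_simps)
    qed
    show "\<forall>\<^sub>F t in at 0. b t \<noteq> 0" by (rule evb)
  qed
qed

fun hpt_conj :: "hpt \<Rightarrow> hpt" where
  "hpt_conj (Aff z y0) = Aff z (- y0)"
| "hpt_conj (Inf c) = Inf (- c)"

lemma on_curve_hpt_conj: "on_curve f (hpt_conj P) = on_curve f P"
  by (cases P) (simp_all add: on_curve_def)

lemma local_param_hpt_conj:
  assumes "local_param f P a b" shows "local_param f (hpt_conj P) a (\<lambda>t. - b t)"
proof -
  obtain r where r: "r > 0" "a holomorphic_on ball 0 r" "b holomorphic_on ball 0 r"
      "deriv a 0 \<noteq> 0 \<or> deriv b 0 \<noteq> 0"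
    and chart: "case P of
        Aff w y0 \<Rightarrow> a 0 = w \<and> b 0 = y0 \<and> (\<forall>t\<in>ball 0 r. (b t)^2 = poly f (a t))
      | Inf c \<Rightarrow> a 0 = 0 \<and> b 0 = c \<and> (\<forall>t\<in>ball 0 r. (b t)^2 = poly (reflect_poly f) (a t))"
    using assms unfolding local_param_def by blast
  have "(\<lambda>t. - b t) holomorphic_on ball 0 r" using r(3) by (intro holomorphic_intros)
  moreover have "deriv (\<lambda>t. - b t) 0 = - deriv b 0"
    using holomorphic_on_ball_DERIV[OF r(3)] r(1) by (intro DERIV_imp_deriv DERIV_minus) simp
  ultimately show ?thesis
    unfolding local_param_def using r chart by (intro exI[of _ r]) (cases P; auto)
qed

section \<open>Holomorphic 2-differentials\<close>

lemma holo_standard_Aff: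
  fixes f p :: "complex poly"
  assumes sep: "separable_poly f" and y0: "y0^2 = poly f z" and lp: "local_param f (Aff z y0) a b"
  shows "ord_ge (local_expr (Aff z y0) 2 (p, [:c:], f) a b) 0"
proof -
  obtain r0 where r0: "r0 > 0" "a holomorphic_on ball 0 r0" "b holomorphic_on ball 0 r0"
      "deriv a 0 \<noteq> 0 \<or> deriv b 0 \<noteq> 0" "a 0 = z" "b 0 = y0" "\<forall>t\<in>ball 0 r0. (b t)^2 = poly f (a t)"
    using lp unfolding local_param_def by auto
  obtain \<rho> K where K: "\<rho> > 0" "\<rho> \<le> r0" "K holomorphic_on ball 0 \<rho>"
    "\<And>t. t \<in> ball 0 \<rho> \<Longrightarrow> deriv a t = b t * K t" "\<forall>\<^sub>F t in at 0. b t \<noteq> 0"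
    by (rule local_param_deriv_factor[OF sep y0 r0]) (rule that, assumption+)
  have sub: "ball 0 \<rho> \<subseteq> ball 0 r0" using K(2) by auto
  have Hhol: "(\<lambda>t. (poly p (a t) + c * b t) * K t ^ 2) holomorphic_on ball 0 \<rho>"
    using holomorphic_on_subset[OF r0(2) sub] holomorphic_on_subset[OF r0(3) sub] K(3)
    by (intro holomorphic_intros poly_holomorphic_on) auto
  have "\<forall>\<^sub>F t in at 0. local_expr (Aff z y0) 2 (p, [:c:], f) a b t = (poly p (a t) + c * b t) * K t ^ 2"
    using K(5) eventually_in_ball_at_0[OF K(1)]
  proof eventually_elim
    case (elim t)
    have "t \<in> ball 0 r0" using elim sub by blast
    hence fa: "poly f (a t) = (b t)^2" using r0(7) by auto
    show ?case using elim fa K(4)[of t] by (simp add: local_expr_def field_simps power2_eq_square)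
  qed
  thus ?thesis by (rule ord_ge_0_intro[OF K(1) Hhol])
qed

lemma standard_Inf_identity:
  fixes A B D Pr c :: complex
  assumes "A \<noteq> 0" "B \<noteq> 0"
  shows "(Pr / A ^ 4 + c * (B / A ^ 4)) / (B ^ 2 / A ^ 8) * (- D / A ^ 2) ^ 2 = (Pr + c * B) * (D / B) ^ 2"
  using assms by (simp add: field_simps eval_nat_numeral)

lemma holo_standard_Inf:
  fixes f p :: "complex poly"
  assumes deg: "degree f = 8" and dp: "degree p \<le> 4" and c0: "c0^2 = lead_coeff f"
    and lp: "local_param f (Inf c0) a b"
  shows "ord_ge (local_expr (Inf c0) 2 (p, [:c:], f) a b) 0"
proof -
  obtain r0 where r0: "r0 > 0" "a holomorphic_on ball 0 r0" "b holomorphic_on ball 0 r0"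
      "deriv a 0 \<noteq> 0 \<or> deriv b 0 \<noteq> 0" "a 0 = 0" "b 0 = c0"
      "\<forall>t\<in>ball 0 r0. (b t)^2 = poly (reflect_poly f) (a t)"
    using lp unfolding local_param_def by auto
  have fnz: "f \<noteq> 0" using deg by auto
  have c0nz: "c0 \<noteq> 0" using c0 fnz by auto
  have did: "2 * b t * deriv b t = poly (pderiv (reflect_poly f)) (a t) * deriv a t" if "t \<in> ball 0 r0" for t
    by (rule deriv_square_eq_poly_comp[OF r0(2,3,7) that])
  have eva: "\<forall>\<^sub>F t in at 0. a t \<noteq> 0"
  proof -
    have "\<exists>\<beta>\<in>ball 0 r0. a \<beta> \<noteq> 0"
    proof (rule ccontr)
      assume "\<not> ?thesis"
      hence a0: "\<forall>t\<in>ball 0 r0. a t = 0" by auto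
      hence da: "deriv a 0 = 0" by (rule deriv_0_if_vanishing[OF r0(2,1)])
      have "2 * b 0 * deriv b 0 = 0" using did[of 0] r0(1) da by simp
      hence "deriv b 0 = 0" using r0(6) c0nz by simp
      thus False using da r0(4) by simp
    qed
    then obtain \<beta> where "\<beta> \<in> ball 0 r0" "a \<beta> \<noteq> 0" by blast
    thus ?thesis by (rule eventually_nonzero_at_0[OF r0(2,1)])
  qed
  have "isCont b 0" by (rule isCont_holomorphic_centre[OF r0(3,1)])
  then obtain \<delta> where \<delta>: "\<delta> > 0" "\<And>t. dist 0 t < \<delta> \<Longrightarrow> b t \<noteq> 0"
    using continuous_at_avoid[of 0 b 0] r0(6) c0nz by auto
  define \<rho> where "\<rho> = min \<delta> r0"
  have \<rho>: "\<rho> > 0" using \<delta> r0 by (simp add: \<rho>_def)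
  have sub: "ball 0 \<rho> \<subseteq> ball 0 r0" by (auto simp: \<rho>_def)
  have bnz: "b t \<noteq> 0" if "t \<in> ball 0 \<rho>" for t using \<delta>(2)[of t] that by (auto simp: \<rho>_def)
  define pr where "pr = reflect_poly p * monom 1 (4 - degree p)"
  have Hhol: "(\<lambda>t. (poly pr (a t) + c * b t) * (deriv a t / b t) ^ 2) holomorphic_on ball 0 \<rho>"
    using holomorphic_on_subset[OF r0(2) sub] holomorphic_on_subset[OF r0(3) sub] bnz
      holomorphic_on_subset[OF holomorphic_deriv[OF r0(2) open_ball] sub]
    by (intro holomorphic_intros poly_holomorphic_on) auto
  have "\<forall>\<^sub>F t in at 0. local_expr (Inf c0) 2 (p, [:c:], f) a b t = (poly pr (a t) + c * b t) * (deriv a t / b t) ^ 2"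
    using eva eventually_in_ball_at_0[OF \<rho>]
  proof eventually_elim
    case (elim t)
    have tr: "t \<in> ball 0 r0" using elim sub by blast
    have B: "b t \<noteq> 0" using bnz elim by blast
    have P1: "poly p (1 / a t) = poly pr (a t) / a t ^ 4" unfolding pr_def by (rule poly_inverse_eq_reflect_4[OF dp elim(1)])
    have F1: "poly f (1 / a t) = (b t)^2 / a t ^ 8"
      using poly_inverse_eq_reflect[OF elim(1), of f] r0(7) tr deg by simp
    show ?case using standard_Inf_identity[OF elim(1) B]
      by (simp add: local_expr_def P1 F1)
  qed
  thus ?thesis by (rule ord_ge_0_intro[OF \<rho> Hhol])
qed

lemma holo_qdiff_standard:
  fixes f p :: "complex poly"
  assumes deg: "degree f = 8" and sep: "separable_poly f" and dp: "degree p \<le> 4"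
  shows "holo_qdiff f 2 (p, [:c:], f)"
  unfolding holo_qdiff_def
proof (intro conjI allI impI)
  show "rf_valid (p, [:c:], f)" using deg by (auto simp: rf_valid_def)
  fix P a b assume P: "on_curve f P" and lp: "local_param f P a b"
  show "ord_ge (local_expr P 2 (p, [:c:], f) a b) 0"
  proof (cases P)
    case (Aff z y0)
    thus ?thesis using holo_standard_Aff[OF sep _ lp[unfolded Aff]] P by (simp add: on_curve_def)
  next
    case (Inf c0)
    thus ?thesis using holo_standard_Inf[OF deg dp _ lp[unfolded Inf]] P by (simp add: on_curve_def)
  qed
qed

lemma no_pole_at_nonbranch:
  fixes f N D N1 D1 g :: "complex poly"
  assumes HA: "\<forall>y0 a b. y0^2 = poly f z \<longrightarrow> local_param f (Aff z y0) a b \<longrightarrow>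
      ord_ge (\<lambda>t. poly N (a t) / poly D (a t) * b t ^ j * deriv a t ^ 2) 0"
    and fz: "poly f z \<noteq> 0"
    and red: "N = N1 * g" "D = D1 * g" "g \<noteq> 0" "D1 \<noteq> 0"
    and z: "poly D1 z = 0" "poly N1 z \<noteq> 0"
  shows False
proof -
  obtain \<rho> s c where s: "\<rho> > 0" "s holomorphic_on ball 0 \<rho>" "s 0 = c" "c \<noteq> 0" "c^2 = poly f z"
    "local_param f (Aff z c) (\<lambda>t. z + t) s"
    by (rule local_param_nonbranch[OF fz]) (rule that, assumption+)
  have ord: "ord_ge (\<lambda>t. poly N (z + t) / poly D (z + t) * s t ^ j * deriv (\<lambda>t. z + t) t ^ 2) 0"
    using HA s(5,6) by blast
  have az: "((\<lambda>t. z + t) \<longlongrightarrow> z) (at 0)" by (intro tendsto_eq_intros) auto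
  have ne: "\<forall>\<^sub>F t in at (0::complex). z + t \<noteq> z" by (simp add: eventually_at_filter)
  have evg: "\<forall>\<^sub>F t in at 0. poly g (z + t) \<noteq> 0" by (rule eventually_poly_comp_nonzero[OF red(3) az ne])
  have evD: "\<forall>\<^sub>F t in at 0. poly D1 (z + t) \<noteq> 0" by (rule eventually_poly_comp_nonzero[OF red(4) az ne])
  have "((\<lambda>t. poly D1 (z + t)) \<longlongrightarrow> 0) (at 0)" using tendsto_poly[OF az, of D1] z(1) by simp
  hence fD: "filterlim (\<lambda>t. poly D1 (z + t)) (at 0) (at 0)" using evD by (intro filterlim_atI) auto
  have lim1: "filterlim (\<lambda>t. poly N1 (z + t) / poly D1 (z + t)) at_infinity (at 0)"
    by (rule filterlim_divide_at_infinity[OF tendsto_poly[OF az] fD z(2)])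
  have "(s \<longlongrightarrow> c) (at 0)" using tendsto_holomorphic_centre[OF s(2,1)] s(3) by simp
  hence sj: "((\<lambda>t. s t ^ j) \<longlongrightarrow> c ^ j) (at 0)" by (intro tendsto_intros)
  have lim2: "filterlim (\<lambda>t. s t ^ j * (poly N1 (z + t) / poly D1 (z + t))) at_infinity (at 0)"
    by (rule tendsto_mult_filterlim_at_infinity[OF sj _ lim1]) (use s(4) in simp)
  have ev: "\<forall>\<^sub>F t in at 0. s t ^ j * (poly N1 (z + t) / poly D1 (z + t)) =
      poly N (z + t) / poly D (z + t) * s t ^ j * deriv (\<lambda>t. z + t) t ^ 2"
    using evg by eventually_elim (simp add: red(1,2))
  have "filterlim (\<lambda>t. poly N (z + t) / poly D (z + t) * s t ^ j * deriv (\<lambda>t. z + t) t ^ 2) at_infinity (at 0)"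
    using filterlim_cong[OF refl refl ev, of at_infinity] lim2 by simp
  thus False using ord_ge_0_not_filterlim_at_infinity[OF ord] by simp
qed

lemma branch_pole_identity:
  fixes A F T Phi N1v D2v :: complex
  assumes AF: "A * F = T ^ 2" and T: "T \<noteq> 0" and F: "F \<noteq> 0" and D: "D2v \<noteq> 0"
    and k: "2 * k = j + 2 + E"
  shows "N1v / (A ^ k * D2v) * T ^ j * (2 * T * Phi) ^ 2 = (4 * N1v * F ^ k * Phi ^ 2 / D2v) / T ^ E"
proof -
  have A: "A = T ^ 2 / F" using AF F by (simp add: field_simps)
  have Ak: "A ^ k = T ^ (2 * k) / F ^ k" by (simp add: A power_divide power_mult)
  have Tk: "T ^ (2 * k) = T ^ j * T ^ 2 * T ^ E" by (simp only: k power_add)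
  have Ak': "A ^ k = T ^ j * T ^ 2 * T ^ E / F ^ k" using Ak Tk by simp
  show ?thesis using T F D by (simp add: Ak' field_simps power2_eq_square)
qed

text \<open>In the parameter \<open>t = y\<close> at a branch point \<open>x - z\<close> vanishes to order 2, so a zero of order
  \<open>k \<ge> 2\<close> of the denominator leaves a pole of order \<open>2k - j - 2 \<ge> 1\<close>.\<close>
lemma pole_at_branch_simple:
  fixes f N D N1 D1 g :: "complex poly"
  assumes HA: "\<forall>y0 a b. y0^2 = poly f z \<longrightarrow> local_param f (Aff z y0) a b \<longrightarrow>
      ord_ge (\<lambda>t. poly N (a t) / poly D (a t) * b t ^ j * deriv a t ^ 2) 0"
    and fz: "poly f z = 0" and fd: "poly (pderiv f) z \<noteq> 0" and j: "j \<le> 1"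
    and red: "N = N1 * g" "D = D1 * g" "g \<noteq> 0" "D1 \<noteq> 0"
    and z: "poly N1 z \<noteq> 0" "order z D1 \<ge> 2"
  shows False
proof -
  obtain \<rho> \<epsilon> \<phi> where br: "\<rho> > 0" "\<epsilon> > 0" "\<phi> holomorphic_on ball 0 \<epsilon>" "\<phi> 0 = z"
    "\<And>s. s \<in> ball 0 \<epsilon> \<Longrightarrow> poly f (\<phi> s) = s" "deriv \<phi> 0 \<noteq> 0"
    "\<And>t::complex. t \<in> ball 0 \<rho> \<Longrightarrow> t^2 \<in> ball 0 \<epsilon>"
    "\<And>t. t \<in> ball 0 \<rho> \<Longrightarrow> deriv (\<lambda>t. \<phi> (t^2)) t = 2 * t * deriv \<phi> (t^2)"
    "local_param f (Aff z 0) (\<lambda>t. \<phi> (t^2)) (\<lambda>t. t)"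
    by (rule local_param_branch[OF fz fd]) (rule that, assumption+)
  define a where "a t = \<phi> (t^2)" for t
  have ord: "ord_ge (\<lambda>t. poly N (a t) / poly D (a t) * t ^ j * deriv a t ^ 2) 0"
    using HA br(9) fz unfolding a_def by simp
  define k where "k = order z D1"
  obtain D2 where D2: "D1 = [:-z,1:] ^ k * D2" "\<not> [:-z,1:] dvd D2"
    using order_decomp[OF red(4)] unfolding k_def by blast
  have D2z: "poly D2 z \<noteq> 0" using D2(2) by (simp add: poly_eq_0_iff_dvd)
  have D2nz: "D2 \<noteq> 0" using D2z by auto
  obtain f1 where f1: "f = [:-z,1:] * f1" using fz by (metis dvdE poly_eq_0_iff_dvd)
  have f1z: "poly f1 z \<noteq> 0" using fd f1 poly_pderiv_linear_factor[of z f1] by metis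
  define E where "E = 2 * k - j - 2"
  have kE: "2 * k = j + 2 + E" "E \<ge> 1" using z(2) j by (auto simp: E_def k_def)
  have at: "(a \<longlongrightarrow> z) (at 0)"
    using tendsto_comp_square[OF br(3,2)] br(4) unfolding a_def[abs_def] by simp
  have dphi: "((\<lambda>t. deriv \<phi> (t^2)) \<longlongrightarrow> deriv \<phi> 0) (at 0)"
    by (rule tendsto_comp_square[OF holomorphic_deriv[OF br(3) open_ball] br(2)])
  define K where "K t = 4 * poly N1 (a t) * poly f1 (a t) ^ k * deriv \<phi> (t^2) ^ 2 / poly D2 (a t)" for t
  have Klim: "(K \<longlongrightarrow> 4 * poly N1 z * poly f1 z ^ k * deriv \<phi> 0 ^ 2 / poly D2 z) (at 0)"
    unfolding K_def using D2z by (intro tendsto_intros tendsto_poly at dphi) auto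
  have K0: "4 * poly N1 z * poly f1 z ^ k * deriv \<phi> 0 ^ 2 / poly D2 z \<noteq> 0"
    using z(1) f1z br(6) D2z by simp
  have key: "(a t - z) * poly f1 (a t) = t ^ 2" if "t \<in> ball 0 \<rho>" for t
    using br(5)[OF br(7)[OF that]] by (simp add: a_def f1 algebra_simps)
  have evt: "\<forall>\<^sub>F t in at (0::complex). t \<noteq> 0 \<and> t \<in> ball 0 \<rho>"
  proof -
    have "\<forall>\<^sub>F t in at (0::complex). t \<noteq> 0" by (simp add: eventually_at_filter)
    thus ?thesis using eventually_in_ball_at_0[OF br(1)] by (rule eventually_conj)
  qed
  have ne: "\<forall>\<^sub>F t in at 0. a t \<noteq> z" using evt
  proof eventually_elim
    case (elim t)
    thus ?case using key[of t] by auto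
  qed
  have evg: "\<forall>\<^sub>F t in at 0. poly g (a t) \<noteq> 0" by (rule eventually_poly_comp_nonzero[OF red(3) at ne])
  have evD2: "\<forall>\<^sub>F t in at 0. poly D2 (a t) \<noteq> 0" by (rule eventually_poly_comp_nonzero[OF D2nz at ne])
  have ev: "\<forall>\<^sub>F t in at 0. poly N (a t) / poly D (a t) * t ^ j * deriv a t ^ 2 = K t / t ^ E"
    using evt evg evD2
  proof eventually_elim
    case (elim t)
    have F: "poly f1 (a t) \<noteq> 0" using key[of t] elim by auto
    have "poly N (a t) / poly D (a t) = poly N1 (a t) / ((a t - z) ^ k * poly D2 (a t))"
      using elim by (simp add: red(1,2) D2(1) poly_power)
    moreover have "deriv a t = 2 * t * deriv \<phi> (t^2)" using br(8) elim unfolding a_def by blast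
    ultimately show ?case
      using branch_pole_identity[OF key[of t] _ F _ kE(1), of "poly D2 (a t)" "poly N1 (a t)" "deriv \<phi> (t^2)"] elim
      by (simp add: K_def)
  qed
  have "filterlim (\<lambda>t. poly N (a t) / poly D (a t) * t ^ j * deriv a t ^ 2) at_infinity (at 0)"
    by (rule filterlim_at_infinity_pole[OF Klim K0 kE(2) ev])
  thus False using ord_ge_0_not_filterlim_at_infinity[OF ord] by simp
qed

lemma Inf_pole_identity:
  fixes T RP RF S :: complex
  assumes T: "T \<noteq> 0" and RF: "RF \<noteq> 0" and de: "d + 4 * j = 4 + e"
  shows "(RP / T ^ d) / (RF / T ^ 8) * (S / T ^ 4) ^ j * (- 1 / T ^ 2) ^ 2 = (RP * S ^ j / RF) / T ^ e"
proof -
  have p: "(S / T ^ 4) ^ j = S ^ j / T ^ (4 * j)" by (simp add: power_divide power_mult)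
  have q: "T ^ d * T ^ (4 * j) = T ^ 4 * T ^ e" by (simp only: power_add[symmetric] de)
  have r: "T ^ 8 = T ^ 4 * T ^ 4" by (simp only: power_add[symmetric]) simp
  have "(RP / T ^ d) / (RF / T ^ 8) * (S ^ j / T ^ (4 * j)) * (- 1 / T ^ 2) ^ 2
      = RP * S ^ j * T ^ 8 / (RF * (T ^ d * T ^ (4 * j)) * T ^ 4)"
    using T RF by (simp add: field_simps power2_eq_square eval_nat_numeral)
  also have "\<dots> = RP * S ^ j * (T ^ 4 * T ^ 4) / (RF * (T ^ 4 * T ^ e) * T ^ 4)" by (simp only: q r)
  also have "\<dots> = (RP * S ^ j / RF) / T ^ e"
  proof -
    have gen: "A * (X * X) / (R * (X * Y) * X) = A / R / Y" if "X \<noteq> 0" for A X Y R :: complex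
      using that by (cases "R = 0"; cases "Y = 0") (simp_all add: field_simps)
    show ?thesis using gen[of "T ^ 4"] T by simp
  qed
  finally show ?thesis by (simp add: p)
qed

text \<open>In the chart \<open>u = 1/x\<close>, \<open>v = y/x\<^sup>4\<close> the differential \<open>p y\<^sup>j / f dx\<^sup>2\<close> has a pole of
  order \<open>deg p + 4j - 4\<close> at \<open>u = 0\<close>.\<close>
lemma degree_bound_at_Inf:
  fixes f N D p :: "complex poly"
  assumes deg: "degree f = 8"
    and HI: "\<forall>c a b. c^2 = lead_coeff f \<longrightarrow> local_param f (Inf c) a b \<longrightarrow>
      ord_ge (\<lambda>t. poly N (1 / a t) / poly D (1 / a t) * (b t / a t ^ 4) ^ j * (- deriv a t / a t ^ 2) ^ 2) 0"
    and NfpD: "N * f = p * D" and D: "D \<noteq> 0" and j: "j \<le> 1" and dp: "degree p + 4 * j > 4"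
  shows False
proof -
  obtain \<rho> s c where s: "\<rho> > 0" "s holomorphic_on ball 0 \<rho>" "s 0 = c" "c \<noteq> 0" "c^2 = lead_coeff f"
    "local_param f (Inf c) (\<lambda>t. t) s"
    by (rule local_param_Inf[OF deg]) (rule that, assumption+)
  have ord: "ord_ge (\<lambda>t. poly N (1 / t) / poly D (1 / t) * (s t / t ^ 4) ^ j * (- 1 / t ^ 2) ^ 2) 0"
    using HI[rule_format, OF s(5,6)] by simp
  have fnz: "f \<noteq> 0" using deg by auto
  have pnz: "p \<noteq> 0" using dp j by auto
  define e where "e = degree p + 4 * j - 4"
  have de: "degree p + 4 * j = 4 + e" "e \<ge> 1" using dp by (auto simp: e_def)
  have t0: "((\<lambda>t::complex. t) \<longlongrightarrow> 0) (at 0)" by (rule tendsto_ident_at)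
  have rD: "\<forall>\<^sub>F t in at 0. poly (reflect_poly D) t \<noteq> 0"
    using tendsto_imp_eventually_ne[OF tendsto_poly[OF t0, of "reflect_poly D"]] D
    by (simp add: poly_0_coeff_0)
  have rf: "\<forall>\<^sub>F t in at 0. poly (reflect_poly f) t \<noteq> 0"
    using tendsto_imp_eventually_ne[OF tendsto_poly[OF t0, of "reflect_poly f"]] fnz
    by (simp add: poly_0_coeff_0)
  have "(s \<longlongrightarrow> c) (at 0)" using tendsto_holomorphic_centre[OF s(2,1)] s(3) by simp
  define K where "K t = poly (reflect_poly p) t * s t ^ j / poly (reflect_poly f) t" for t
  have Klim: "(K \<longlongrightarrow> lead_coeff p * c ^ j / lead_coeff f) (at 0)"
    unfolding K_def using \<open>(s \<longlongrightarrow> c) (at 0)\<close> tendsto_poly[OF t0, of "reflect_poly p"]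
      tendsto_poly[OF t0, of "reflect_poly f"] fnz
    by (auto intro!: tendsto_intros simp: poly_0_coeff_0)
  have K0: "lead_coeff p * c ^ j / lead_coeff f \<noteq> 0" using pnz fnz s(4) by simp
  have nz: "\<forall>\<^sub>F t in at (0::complex). t \<noteq> 0" by (simp add: eventually_at_filter)
  have ev: "\<forall>\<^sub>F t in at 0. poly N (1 / t) / poly D (1 / t) * (s t / t ^ 4) ^ j * (- 1 / t ^ 2) ^ 2 = K t / t ^ e"
    using nz rD rf
  proof eventually_elim
    case (elim t)
    have Dv: "poly D (1 / t) \<noteq> 0" using poly_inverse_eq_reflect[OF elim(1), of D] elim by simp
    have fv: "poly f (1 / t) = poly (reflect_poly f) t / t ^ 8" using poly_inverse_eq_reflect[OF elim(1), of f] deg by simp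
    hence fv': "poly f (1 / t) \<noteq> 0" using elim by simp
    have pv: "poly p (1 / t) = poly (reflect_poly p) t / t ^ degree p" by (rule poly_inverse_eq_reflect[OF elim(1)])
    have "poly N (1 / t) * poly f (1 / t) = poly p (1 / t) * poly D (1 / t)"
      using arg_cong[OF NfpD, of "\<lambda>q. poly q (1 / t)"] by simp
    hence "poly N (1 / t) / poly D (1 / t) = poly p (1 / t) / poly f (1 / t)"
      using Dv fv' by (simp add: field_simps)
    also have "\<dots> = (poly (reflect_poly p) t / t ^ degree p) / (poly (reflect_poly f) t / t ^ 8)"
      by (simp add: pv fv)
    finally show ?case using Inf_pole_identity[OF elim(1) elim(3) de(1), of "poly (reflect_poly p) t" "s t"]
      by (simp add: K_def)
  qed
  have "filterlim (\<lambda>t. poly N (1 / t) / poly D (1 / t) * (s t / t ^ 4) ^ j * (- 1 / t ^ 2) ^ 2) at_infinity (at 0)"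
    by (rule filterlim_at_infinity_pole[OF Klim K0 de(2) ev])
  thus False using ord_ge_0_not_filterlim_at_infinity[OF ord] by simp
qed

lemma quotient_over_f:
  fixes f N D :: "complex poly"
  assumes deg: "degree f = 8" and sep: "separable_poly f" and D: "D \<noteq> 0" and j: "j \<le> 1"
    and HA: "\<And>z y0 a b. y0^2 = poly f z \<Longrightarrow> local_param f (Aff z y0) a b \<Longrightarrow>
      ord_ge (\<lambda>t. poly N (a t) / poly D (a t) * b t ^ j * deriv a t ^ 2) 0"
    and HI: "\<And>c a b. c^2 = lead_coeff f \<Longrightarrow> local_param f (Inf c) a b \<Longrightarrow>
      ord_ge (\<lambda>t. poly N (1 / a t) / poly D (1 / a t) * (b t / a t ^ 4) ^ j * (- deriv a t / a t ^ 2) ^ 2) 0"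
  shows "\<exists>p. N * f = p * D \<and> degree p + 4 * j \<le> 4"
proof -
  obtain N1 D1 g where red: "N = N1 * g" "D = D1 * g" "coprime N1 D1" "D1 \<noteq> 0" "g \<noteq> 0"
    by (rule reduce_fraction[OF D]) (rule that, assumption+)
  have fnz: "f \<noteq> 0" using deg by auto
  have roots: "\<forall>z. poly D1 z = 0 \<longrightarrow> poly f z = 0 \<and> order z D1 \<le> 1"
  proof (intro allI impI)
    fix z assume z: "poly D1 z = 0"
    have N1z: "poly N1 z \<noteq> 0" by (rule coprime_poly_nonzero_at_root[OF red(3) z])
    have HAz: "\<forall>y0 a b. y0^2 = poly f z \<longrightarrow> local_param f (Aff z y0) a b \<longrightarrow>
      ord_ge (\<lambda>t. poly N (a t) / poly D (a t) * b t ^ j * deriv a t ^ 2) 0" using HA by blast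
    have fz: "poly f z = 0"
    proof (rule ccontr)
      assume "poly f z \<noteq> 0"
      thus False using no_pole_at_nonbranch[OF HAz _ red(1,2,5,4) z N1z] by blast
    qed
    have fd: "poly (pderiv f) z \<noteq> 0" by (rule separable_poly_pderiv_nonzero[OF sep fz])
    have "order z D1 \<le> 1"
    proof (rule ccontr)
      assume "\<not> order z D1 \<le> 1"
      hence "order z D1 \<ge> 2" by simp
      thus False using pole_at_branch_simple[OF HAz fz fd j red(1,2,5,4) N1z] by blast
    qed
    thus "poly f z = 0 \<and> order z D1 \<le> 1" using fz by simp
  qed
  have HIo: "\<forall>c a b. c^2 = lead_coeff f \<longrightarrow> local_param f (Inf c) a b \<longrightarrow>
      ord_ge (\<lambda>t. poly N (1 / a t) / poly D (1 / a t) * (b t / a t ^ 4) ^ j * (- deriv a t / a t ^ 2) ^ 2) 0"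
    using HI by blast
  have "D1 dvd f" by (rule dvd_if_roots_simple[OF red(4) fnz roots])
  then obtain h where h: "f = D1 * h" by (rule dvdE)
  define p where "p = N1 * h"
  have NfpD: "N * f = p * D" by (simp add: red(1,2) h p_def algebra_simps)
  have "degree p + 4 * j \<le> 4"
  proof (rule ccontr)
    assume "\<not> degree p + 4 * j \<le> 4"
    hence "degree p + 4 * j > 4" by simp
    thus False using degree_bound_at_Inf[OF deg HIo NfpD D j] by blast
  qed
  thus ?thesis using NfpD by blast
qed

lemma rf_eval_even_odd: "rf_eval (A, B, Q) x y = rf_eval (A, 0, Q) x y + rf_eval (0, B, Q) x y"
  by (simp add: add_divide_distrib)

lemma rf_eval_minus: "rf_eval (A, B, Q) x (- y) = rf_eval (A, 0, Q) x y - rf_eval (0, B, Q) x y"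
  by (simp add: diff_divide_distrib)

lemma local_expr_even_odd:
  "local_expr P q (A, B, Q) a b t = local_expr P q (A, 0, Q) a b t + local_expr P q (0, B, Q) a b t"
  by (cases P) (simp_all only: local_expr_def hpt.case rf_eval_even_odd[of A B Q] distrib_right)

lemma local_expr_hpt_conj:
  "local_expr (hpt_conj P) q (A, B, Q) a (\<lambda>t. - b t) t
     = local_expr P q (A, 0, Q) a b t - local_expr P q (0, B, Q) a b t"
  by (cases P) (simp_all only: local_expr_def hpt.case hpt_conj.simps minus_divide_left[symmetric]
      rf_eval_minus left_diff_distrib)

lemma holo_qdiffD:
  "holo_qdiff f q \<omega> \<Longrightarrow> on_curve f P \<Longrightarrow> local_param f P a b \<Longrightarrow> ord_ge (local_expr P q \<omega> a b) 0"
  by (simp add: holo_qdiff_def)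

text \<open>The involution \<open>y \<mapsto> -y\<close> maps holomorphic differentials to holomorphic ones, so the
  parts even and odd in \<open>y\<close> are holomorphic separately.\<close>
lemma holo_qdiff_even_odd:
  assumes H: "holo_qdiff f q (A, B, Q)"
  shows "holo_qdiff f q (A, 0, Q)" "holo_qdiff f q (0, B, Q)"
proof -
  have sum: "ord_ge (\<lambda>t. (1/2) * (local_expr P q (A, B, Q) a b t +
        s * local_expr (hpt_conj P) q (A, B, Q) a (\<lambda>t. - b t) t)) 0"
    if "on_curve f P" "local_param f P a b" for P a b s
    using holo_qdiffD[OF H that] holo_qdiffD[OF H _ local_param_hpt_conj[OF that(2)]] that(1)
    by (intro ord_ge_0_cmult ord_ge_0_add) (auto simp: on_curve_hpt_conj)
  have "ord_ge (local_expr P q (A, 0, Q) a b) 0" if "on_curve f P" "local_param f P a b" for P a b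
    using sum[OF that, of 1]
    by (simp add: local_expr_even_odd[of P q A B Q a b] local_expr_hpt_conj[of P q A B Q a b])
  thus "holo_qdiff f q (A, 0, Q)" using H by (simp add: holo_qdiff_def rf_valid_def)
  have "ord_ge (local_expr P q (0, B, Q) a b) 0" if "on_curve f P" "local_param f P a b" for P a b
    using sum[OF that, of "- 1"]
    by (simp add: local_expr_even_odd[of P q A B Q a b] local_expr_hpt_conj[of P q A B Q a b])
  thus "holo_qdiff f q (0, B, Q)" using H by (simp add: holo_qdiff_def rf_valid_def)
qed

lemma holo_qdiff_2_classification:
  fixes f A B Q :: "complex poly"
  assumes deg: "degree f = 8" and sep: "separable_poly f" and H: "holo_qdiff f 2 (A, B, Q)"
  shows "\<exists>p c. A * f = p * Q \<and> degree p \<le> 4 \<and> B * f = smult c Q"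
proof -
  have Q: "Q \<noteq> 0" using H by (simp add: holo_qdiff_def rf_valid_def)
  note even = holo_qdiffD[OF holo_qdiff_even_odd(1)[OF H]]
  note odd = holo_qdiffD[OF holo_qdiff_even_odd(2)[OF H]]
  have "\<exists>p. A * f = p * Q \<and> degree p + 4 * 0 \<le> 4"
  proof (rule quotient_over_f[OF deg sep Q])
    show "ord_ge (\<lambda>t. poly A (a t) / poly Q (a t) * b t ^ 0 * deriv a t ^ 2) 0"
      if "y0^2 = poly f z" "local_param f (Aff z y0) a b" for z y0 a b
      using even[OF _ that(2)] that(1) by (simp add: on_curve_def local_expr_def[abs_def])
    show "ord_ge (\<lambda>t. poly A (1 / a t) / poly Q (1 / a t) * (b t / a t ^ 4) ^ 0 *
        (- deriv a t / a t ^ 2) ^ 2) 0"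
      if "c^2 = lead_coeff f" "local_param f (Inf c) a b" for c a b
      using even[OF _ that(2)] that(1) by (simp add: on_curve_def local_expr_def[abs_def])
  qed simp
  then obtain p where p: "A * f = p * Q" "degree p \<le> 4" by auto
  have "\<exists>s. B * f = s * Q \<and> degree s + 4 * 1 \<le> 4"
  proof (rule quotient_over_f[OF deg sep Q])
    show "ord_ge (\<lambda>t. poly B (a t) / poly Q (a t) * b t ^ 1 * deriv a t ^ 2) 0"
      if "y0^2 = poly f z" "local_param f (Aff z y0) a b" for z y0 a b
      using odd[OF _ that(2)] that(1) by (simp add: on_curve_def local_expr_def[abs_def])
    show "ord_ge (\<lambda>t. poly B (1 / a t) / poly Q (1 / a t) * (b t / a t ^ 4) ^ 1 *
        (- deriv a t / a t ^ 2) ^ 2) 0"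
      if "c^2 = lead_coeff f" "local_param f (Inf c) a b" for c a b
      using odd[OF _ that(2)] that(1) by (simp add: on_curve_def local_expr_def[abs_def] mult_ac)
  qed simp
  then obtain s where s: "B * f = s * Q" "degree s = 0" by auto
  have "s = [:coeff s 0:]" using s(2) by (rule degree_0_id[symmetric])
  hence "B * f = [:coeff s 0:] * Q" using s(1) by metis
  hence "B * f = smult (coeff s 0) Q" by simp
  with p show ?thesis by blast
qed

section \<open>Taylor remainder of the branch\<close>

lemma poly_taylor_poly:
  "poly (taylor_poly Y w k) x = (\<Sum>j\<le>k. (deriv ^^ j) Y w / fact j * (x - w) ^ j)"
  unfolding taylor_poly_def by (simp add: poly_sum poly_power)

lemma degree_taylor_poly: "degree (taylor_poly Y w k) \<le> k"
  unfolding taylor_poly_def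
proof (rule degree_sum_le)
  fix j assume "j \<in> {..k}"
  hence "j \<le> k" by simp
  thus "degree (smult ((deriv ^^ j) Y w / fact j) ([:- w, 1:] ^ j)) \<le> k"
    using degree_power_le[of "[:-w,1:]" j] by (metis degree_smult_le le_trans degree_linear_power)
qed simp

lemma taylor_remainder_holomorphic:
  assumes Y: "Y holomorphic_on ball w r"
  obtains Z where "Z holomorphic_on ball w r"
    "\<And>x. x \<in> ball w r \<Longrightarrow> Y x - poly (taylor_poly Y w k) x = (x - w) ^ Suc k * Z x"
proof -
  define cY where "cY n = (deriv ^^ n) Y w / fact n" for n
  define T where "T = taylor_poly Y w k"
  define Z where "Z x = (\<Sum>i. cY (i + Suc k) * (x - w) ^ i)" for x
  have Tx: "poly T x = (\<Sum>i<Suc k. cY i * (x - w) ^ i)" for x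
    unfolding T_def poly_taylor_poly cY_def lessThan_Suc_atMost ..
  have ser: "(\<lambda>n. cY n * (x - w) ^ n) sums Y x" if "x \<in> ball w r" for x
    unfolding cY_def using holomorphic_power_series[OF Y that] by simp
  have shifted: "(\<lambda>i. cY (i + Suc k) * (x - w) ^ (i + Suc k)) sums (Y x - poly T x)"
    if "x \<in> ball w r" for x
    using sums_split_initial_segment[OF ser[OF that], of "Suc k"] by (simp add: Tx)
  have Zsums: "(\<lambda>i. cY (i + Suc k) * (x - w) ^ i) sums Z x" if "x \<in> ball w r" for x
  proof (cases "x = w")
    case True
    have "(\<lambda>i. cY (i + Suc k) * 0 ^ i) sums cY (0 + Suc k)" by (rule powser_sums_zero)
    hence "summable (\<lambda>i. cY (i + Suc k) * (x - w) ^ i)" using True by (simp add: sums_summable)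
    thus ?thesis unfolding Z_def by (rule summable_sums)
  next
    case False
    have "(\<lambda>i. cY (i + Suc k) * (x - w) ^ (i + Suc k) / (x - w) ^ Suc k)
        sums ((Y x - poly T x) / (x - w) ^ Suc k)"
      by (rule sums_divide[OF shifted[OF that]])
    moreover have "(\<lambda>i. cY (i + Suc k) * (x - w) ^ (i + Suc k) / (x - w) ^ Suc k)
        = (\<lambda>i. cY (i + Suc k) * (x - w) ^ i)"
      using False by (simp add: power_add)
    ultimately have "summable (\<lambda>i. cY (i + Suc k) * (x - w) ^ i)" by (metis sums_summable)
    thus ?thesis unfolding Z_def by (rule summable_sums)
  qed
  have "Z holomorphic_on ball w r"
    by (rule power_series_holomorphic[where a="\<lambda>i. cY (i + Suc k)"]) (use Zsums in auto)
  moreover have "Y x - poly T x = (x - w) ^ Suc k * Z x" if "x \<in> ball w r" for x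
  proof -
    have "(\<lambda>i. (x - w) ^ Suc k * (cY (i + Suc k) * (x - w) ^ i)) sums ((x - w) ^ Suc k * Z x)"
      by (rule sums_mult[OF Zsums[OF that]])
    moreover have "(\<lambda>i. (x - w) ^ Suc k * (cY (i + Suc k) * (x - w) ^ i))
        = (\<lambda>i. cY (i + Suc k) * (x - w) ^ (i + Suc k))"
      by (simp add: power_add algebra_simps)
    ultimately show ?thesis using shifted[OF that] sums_unique2 by metis
  qed
  ultimately show ?thesis using that unfolding T_def by blast
qed

text \<open>\<open>Y - T\<^sub>4\<close> cannot vanish identically, since \<open>f\<close> is not the square of a polynomial.\<close>
lemma taylor_remainder_factor:
  fixes f :: "complex poly" and Y :: "complex \<Rightarrow> complex"
  assumes deg: "degree f = 8" and sep: "separable_poly f" and r: "r > 0"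
    and Y: "Y holomorphic_on ball w r" and Ysq: "\<forall>x\<in>ball w r. (Y x)^2 = poly f x"
  obtains m Z \<rho> where "m \<ge> 5" "0 < \<rho>" "Z holomorphic_on ball w \<rho>" "Z w \<noteq> 0"
    "\<And>x. x \<in> ball w \<rho> \<Longrightarrow> Y x - poly (taylor_poly Y w 4) x = (x - w) ^ m * Z x"
proof -
  define T4 where "T4 = taylor_poly Y w 4"
  obtain Z5 where Z5hol: "Z5 holomorphic_on ball w r"
    and Z5eq: "\<And>x. x \<in> ball w r \<Longrightarrow> Y x - poly T4 x = (x - w) ^ 5 * Z5 x"
    using taylor_remainder_holomorphic[OF Y, where k=4] unfolding T4_def by auto
  have "\<exists>m Z \<rho>. m \<ge> 5 \<and> 0 < \<rho> \<and> Z holomorphic_on ball w \<rho> \<and> Z w \<noteq> 0 \<and>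
    (\<forall>x\<in>ball w \<rho>. Y x - poly T4 x = (x - w) ^ m * Z x)"
  proof (cases "Z5 w = 0")
    case False
    thus ?thesis using Z5hol Z5eq r by (intro exI[of _ 5] exI[of _ Z5] exI[of _ r]) auto
  next
    case True
    have nonconst: "\<not> Z5 constant_on ball w r"
    proof
      assume "Z5 constant_on ball w r"
      then obtain c where c: "\<And>x. x \<in> ball w r \<Longrightarrow> Z5 x = c" unfolding constant_on_def by blast
      hence "c = 0" using True r c[of w] by simp
      hence "\<forall>x\<in>ball w r. poly f x = poly (T4 ^ 2) x"
        using c Z5eq Ysq by (auto simp: poly_power)
      hence "f = T4 ^ 2" using r poly_eq_if_eq_on_ball by blast
      hence "degree f = 0" by (intro separable_square_degree_0[OF sep])
      thus False using deg by simp
    qed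
    obtain g \<rho> n where g: "0 < n" "0 < \<rho>" "ball w \<rho> \<subseteq> ball w r" "g holomorphic_on ball w \<rho>"
      "\<And>x. x \<in> ball w \<rho> \<Longrightarrow> Z5 x = (x - w) ^ n * g x" "\<And>x. x \<in> ball w \<rho> \<Longrightarrow> g x \<noteq> 0"
      by (rule holomorphic_factor_zero_nonconstant[OF Z5hol open_ball connected_ball
            centre_in_ball[THEN iffD2, OF r] True nonconst]) (rule that, assumption+)
    show ?thesis
    proof (intro exI[of _ "5 + n"] exI[of _ g] exI[of _ \<rho>] conjI ballI)
      show "5 \<le> 5 + n" "0 < \<rho>" "g holomorphic_on ball w \<rho>" "g w \<noteq> 0" using g by auto
      fix x assume "x \<in> ball w \<rho>"
      thus "Y x - poly T4 x = (x - w) ^ (5 + n) * g x"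
        using Z5eq[of x] g(3,5) by (auto simp: power_add)
    qed
  qed
  then obtain m Z \<rho> where m: "m \<ge> 5" "0 < \<rho>" "Z holomorphic_on ball w \<rho>" "Z w \<noteq> 0"
    "\<forall>x\<in>ball w \<rho>. Y x - poly T4 x = (x - w) ^ m * Z x" by blast
  show ?thesis by (rule that[OF m(1-4)]) (use m(5) in \<open>auto simp: T4_def\<close>)
qed

section \<open>The 2-gap sequence at a non-branch point\<close>

lemma in_q_gaps:
  "holo_qdiff f q \<omega> \<Longrightarrow> qdiff_ord f q P \<omega> (int k) \<Longrightarrow> rf_nonzero \<omega> \<Longrightarrow> k + 1 \<in> q_gaps f q P"
  unfolding q_gaps_def mem_Collect_eq by (intro conjI exI[of _ \<omega>]) auto

lemma q_weight_six_gaps: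
  assumes "q_gaps f q P = {1, 2, 3, 4, 5, n}" "n \<ge> 6"
  shows "q_weight f q P = int n - 6"
proof -
  have "card {1, 2, 3, 4, 5, n} = 6" "(\<Sum>k\<in>{1, 2, 3, 4, 5, n}. int k) = 15 + int n"
    using assms(2) by simp_all
  moreover have "(\<Sum>i=1..6. int i) = 21" by (simp add: numeral_eq_Suc)
  ultimately show ?thesis unfolding q_weight_def assms(1) by simp
qed

locale affine_branch =
  fixes f :: "complex poly" and w :: complex and Y :: "complex \<Rightarrow> complex" and r :: real
  assumes r_pos: "r > 0" and Y_holomorphic: "Y holomorphic_on ball w r"
    and Y_squared: "\<forall>x\<in>ball w r. (Y x)^2 = poly f x" and f_w_nonzero: "poly f w \<noteq> 0"
begin

abbreviation Pw :: hpt where "Pw \<equiv> Aff w (Y w)"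

lemma f_nonzero: "f \<noteq> 0"
  using f_w_nonzero by auto

lemma local_param_Pw:
  assumes "local_param f Pw a b"
  obtains r0 where "r0 > 0" "a holomorphic_on ball 0 r0" "a 0 = w" "deriv a 0 \<noteq> 0"
    "\<forall>\<^sub>F t in at 0. b t = Y (a t) \<and> a t \<in> ball w r"
proof -
  obtain r0 where r0: "r0 > 0" "a holomorphic_on ball 0 r0" "b holomorphic_on ball 0 r0"
    "deriv a 0 \<noteq> 0 \<or> deriv b 0 \<noteq> 0" "a 0 = w" "b 0 = Y w" "\<forall>t\<in>ball 0 r0. (b t)^2 = poly f (a t)"
    using assms unfolding local_param_def by auto
  have Yw: "Y w \<noteq> 0" using Y_squared[rule_format, of w] r_pos f_w_nonzero by auto
  have "2 * b 0 * deriv b 0 = poly (pderiv f) (a 0) * deriv a 0"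
    by (rule deriv_square_eq_poly_comp[OF r0(2,3,7)]) (simp add: r0(1))
  hence da: "deriv a 0 \<noteq> 0" using r0(4,6) Yw by auto
  have at: "(a \<longlongrightarrow> w) (at 0)" using tendsto_holomorphic_centre[OF r0(2,1)] r0(5) by simp
  have Ya: "((\<lambda>t. Y (a t)) \<longlongrightarrow> Y w) (at 0)"
    using isCont_tendsto_compose[OF isCont_holomorphic_centre[OF Y_holomorphic r_pos] at] .
  have "(b \<longlongrightarrow> Y w) (at 0)" using tendsto_holomorphic_centre[OF r0(3,1)] r0(6) by simp
  hence "((\<lambda>t. b t + Y (a t)) \<longlongrightarrow> Y w + Y w) (at 0)" using Ya by (rule tendsto_add)
  hence sum_nz: "\<forall>\<^sub>F t in at 0. b t + Y (a t) \<noteq> 0"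
    by (rule tendsto_imp_eventually_ne) (use Yw in simp)
  have "\<forall>\<^sub>F t in at 0. a t \<in> ball w r" using topological_tendstoD[OF at open_ball] r_pos by simp
  hence "\<forall>\<^sub>F t in at 0. b t = Y (a t) \<and> a t \<in> ball w r"
    using sum_nz eventually_in_ball_at_0[OF r0(1)]
  proof eventually_elim
    case (elim t)
    have "(b t - Y (a t)) * (b t + Y (a t)) = (b t)^2 - (Y (a t))^2"
      by (simp add: power2_eq_square algebra_simps)
    also have "\<dots> = 0" using r0(7) Y_squared elim by auto
    finally show ?case using elim by auto
  qed
  with r0 da show ?thesis using that by blast
qed

lemma local_param_Pw_exists: "local_param f Pw (\<lambda>t. w + t) (\<lambda>t. Y (w + t))"
proof -
  have img: "(\<lambda>t. w + t) ` ball 0 r \<subseteq> ball w r" by (auto simp: dist_norm)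
  have "(\<lambda>t. w + t) holomorphic_on ball 0 r" by (intro holomorphic_intros)
  hence "(\<lambda>t. Y (w + t)) holomorphic_on ball 0 r"
    using holomorphic_on_compose_gen[OF _ Y_holomorphic img] by (simp add: o_def)
  moreover have "\<forall>t\<in>ball 0 r. (Y (w + t))^2 = poly f (w + t)" using Y_squared img by blast
  ultimately show ?thesis unfolding local_param_def using r_pos
    by (intro exI[of _ r]) (auto intro!: holomorphic_intros)
qed

lemma qdiff_ord_Pw_unique:
  assumes "qdiff_ord f q Pw \<omega> n" "qdiff_ord f q Pw \<omega> n'" shows "n = n'"
  using assms local_param_Pw_exists has_order_unique unfolding qdiff_ord_def by blast

text \<open>Near \<open>Pw\<close> the coordinate \<open>x - w\<close> is a local parameter and \<open>dx / f\<close> is a unit, so the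
  order of \<open>(p + c y) / f dx\<^sup>2\<close> at \<open>Pw\<close> is the order of \<open>p + c Y\<close> at \<open>w\<close>.\<close>
lemma qdiff_ord_Pw:
  assumes \<Phi>: "\<sigma> > 0" "\<Phi> holomorphic_on ball w \<sigma>" "\<Phi> w \<noteq> 0"
      "\<And>x. x \<in> ball w \<sigma> \<Longrightarrow> poly p x + c * Y x = (x - w) ^ n * \<Phi> x"
    and quot: "A * f = p * Q" "B * f = smult c Q" "Q \<noteq> 0"
  shows "qdiff_ord f 2 Pw (A, B, Q) (int n)"
  unfolding qdiff_ord_def
proof (intro allI impI)
  fix a b assume "local_param f Pw a b"
  then obtain r0 where r0: "r0 > 0" "a holomorphic_on ball 0 r0" "a 0 = w" "deriv a 0 \<noteq> 0"
    and evb: "\<forall>\<^sub>F t in at 0. b t = Y (a t) \<and> a t \<in> ball w r"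
    by (rule local_param_Pw)
  obtain \<delta> where \<delta>: "\<delta> > 0" "\<And>x. dist w x < \<delta> \<Longrightarrow> poly f x \<noteq> 0"
    using continuous_at_avoid[of w "poly f" 0] f_w_nonzero by auto
  define \<sigma>' where "\<sigma>' = min \<sigma> \<delta>"
  have \<sigma>': "\<sigma>' > 0" "ball w \<sigma>' \<subseteq> ball w \<sigma>" using \<Phi>(1) \<delta>(1) by (auto simp: \<sigma>'_def)
  have f_nz: "poly f x \<noteq> 0" if "x \<in> ball w \<sigma>'" for x using that \<delta>(2) by (auto simp: \<sigma>'_def)
  have at: "(a \<longlongrightarrow> w) (at 0)" using tendsto_holomorphic_centre[OF r0(2,1)] r0(3) by simp
  have eva: "\<forall>\<^sub>F t in at 0. a t \<in> ball w \<sigma>'" using topological_tendstoD[OF at open_ball] \<sigma>' by simp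
  have evQ: "\<forall>\<^sub>F t in at 0. poly Q (a t) \<noteq> 0"
    using eventually_poly_comp_nonzero[OF quot(3) at] eventually_coordinate_ne[OF r0(2,1,4)] r0(3)
    by simp
  define G where "G x = \<Phi> x / poly f x" for x
  have G: "G holomorphic_on ball w \<sigma>'" "G w \<noteq> 0" unfolding G_def
    using holomorphic_on_subset[OF \<Phi>(2) \<sigma>'(2)] f_nz \<Phi>(3) f_w_nonzero
    by (auto intro!: holomorphic_intros poly_holomorphic_on)
  have U: "(\<lambda>t. deriv a t ^ 2) holomorphic_on ball 0 r0"
    using holomorphic_deriv[OF r0(2) open_ball] r0(2) by (intro holomorphic_intros) auto
  have U0: "deriv a 0 ^ 2 \<noteq> 0" using r0(4) by simp
  have "\<forall>\<^sub>F t in at 0. local_expr Pw 2 (A, B, Q) a b t = (a t - w) ^ n * G (a t) * deriv a t ^ 2"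
    using evb eva evQ
  proof eventually_elim
    case (elim t)
    have "a t \<in> ball w \<sigma>" using elim \<sigma>'(2) by blast
    thus ?case using elim \<Phi>(4)[of "a t"] poly_ratio_eq[OF quot(1,2) elim(3) f_nz[of "a t"]]
      by (simp add: local_expr_def G_def)
  qed
  then show "has_order (local_expr Pw 2 (A, B, Q) a b) (int n)"
    by (rule has_order_comp_coordinate[OF r0 G(1) \<sigma>'(1) G(2) U r0(1) U0])
qed

end

locale taylor_contact = affine_branch +
  fixes T :: "complex poly" and m :: nat and Z :: "complex \<Rightarrow> complex" and \<rho> :: real
  assumes degree_T: "degree T \<le> 4" and m_ge_5: "m \<ge> 5" and \<rho>_pos: "\<rho> > 0"
    and Z_holomorphic: "Z holomorphic_on ball w \<rho>" and Z_w_nonzero: "Z w \<noteq> 0"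
    and Y_minus_T: "\<And>x. x \<in> ball w \<rho> \<Longrightarrow> Y x - poly T x = (x - w) ^ m * Z x"
begin

lemma order_Y_minus_T: "qdiff_ord f 0 Pw (- T, 1, 1) (int m)"
  unfolding qdiff_ord_def
proof (intro allI impI)
  fix a b assume "local_param f Pw a b"
  then obtain r0 where r0: "r0 > 0" "a holomorphic_on ball 0 r0" "a 0 = w" "deriv a 0 \<noteq> 0"
    and evb: "\<forall>\<^sub>F t in at 0. b t = Y (a t) \<and> a t \<in> ball w r"
    by (rule local_param_Pw)
  have at: "(a \<longlongrightarrow> w) (at 0)" using tendsto_holomorphic_centre[OF r0(2,1)] r0(3) by simp
  have "\<forall>\<^sub>F t in at 0. a t \<in> ball w \<rho>" using topological_tendstoD[OF at open_ball] \<rho>_pos by simp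
  with evb have "\<forall>\<^sub>F t in at 0. local_expr Pw 0 (- T, 1, 1) a b t = (a t - w) ^ m * Z (a t) * 1"
  proof eventually_elim
    case (elim t)
    thus ?case using Y_minus_T[of "a t"] by (simp add: local_expr_def)
  qed
  then show "has_order (local_expr Pw 0 (- T, 1, 1) a b) (int m)"
    by (rule has_order_comp_coordinate[where U="\<lambda>_. 1", OF r0 Z_holomorphic \<rho>_pos Z_w_nonzero
          holomorphic_on_const zero_less_one one_neq_zero])
qed

text \<open>For \<open>c \<noteq> 0\<close> write \<open>p + c Y = (p + c T) + c (Y - T)\<close>: a nonzero polynomial of degree at
  most 4 vanishes at \<open>w\<close> to order below \<open>5 \<le> m\<close>.\<close>
lemma p_plus_cY_factor:
  assumes "degree p \<le> 4" "p \<noteq> 0 \<or> c \<noteq> 0"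
  obtains n \<Phi> \<sigma> where "n \<le> 4 \<or> n = m" "\<sigma> > 0" "\<Phi> holomorphic_on ball w \<sigma>" "\<Phi> w \<noteq> 0"
    "\<And>x. x \<in> ball w \<sigma> \<Longrightarrow> poly p x + c * Y x = (x - w) ^ n * \<Phi> x"
proof (cases "c = 0")
  case True
  obtain k q where kq: "k \<le> degree p" "poly q w \<noteq> 0" "\<And>x. poly p x = (x - w) ^ k * poly q x"
    using poly_factor_at[of p w] assms True by blast
  moreover have "poly q holomorphic_on ball w 1" using poly_holomorphic_on[of "\<lambda>x. x" _ q] by simp
  ultimately show ?thesis using that[of k 1 "poly q"] assms(1) True by auto
next
  case False
  define q where "q = p + smult c T"
  have dq: "degree q \<le> 4" unfolding q_def using assms(1) degree_T
    by (meson degree_add_le degree_smult_le le_trans)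
  have eq: "poly p x + c * Y x = poly q x + c * ((x - w) ^ m * Z x)" if "x \<in> ball w \<rho>" for x
    using Y_minus_T[OF that] by (simp add: q_def algebra_simps)
  show ?thesis
  proof (cases "q = 0")
    case True
    have "(\<lambda>x. c * Z x) holomorphic_on ball w \<rho>" using Z_holomorphic by (intro holomorphic_intros)
    thus ?thesis using that[of m \<rho> "\<lambda>x. c * Z x"] True eq \<rho>_pos Z_w_nonzero False by auto
  next
    case False
    obtain k q1 where kq: "k \<le> degree q" "poly q1 w \<noteq> 0" "\<And>x. poly q x = (x - w) ^ k * poly q1 x"
      using poly_factor_at[where w=w, OF False] by blast
    have km: "k < m" using kq(1) dq m_ge_5 by simp
    define \<Phi> where "\<Phi> x = poly q1 x + c * ((x - w) ^ (m - k) * Z x)" for x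
    have "\<Phi> holomorphic_on ball w \<rho>" unfolding \<Phi>_def using Z_holomorphic
      by (intro holomorphic_intros poly_holomorphic_on) auto
    moreover have "\<Phi> w = poly q1 w" using km by (simp add: \<Phi>_def)
    moreover have "poly p x + c * Y x = (x - w) ^ k * \<Phi> x" if "x \<in> ball w \<rho>" for x
    proof -
      have "(x - w) ^ m = (x - w) ^ k * (x - w) ^ (m - k)" using km by (simp add: power_add[symmetric])
      thus ?thesis using eq[OF that] kq(3)[of x] by (simp add: \<Phi>_def algebra_simps)
    qed
    ultimately show ?thesis using that[of k \<rho> \<Phi>] kq(1,2) dq \<rho>_pos by auto
  qed
qed

lemma q_gaps_Pw_superset:
  assumes deg: "degree f = 8" and sep: "separable_poly f"
  shows "{1, 2, 3, 4, 5, m + 1} \<subseteq> q_gaps f 2 Pw"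
proof -
  have low: "k + 1 \<in> q_gaps f 2 Pw" if "k \<le> 4" for k
  proof -
    have "holo_qdiff f 2 ([:-w,1:] ^ k, [:0:], f)"
      by (rule holo_qdiff_standard[OF deg sep]) (use that in \<open>simp add: degree_linear_power\<close>)
    moreover have "qdiff_ord f 2 Pw ([:-w,1:] ^ k, [:0:], f) (int k)"
      by (rule qdiff_ord_Pw[where \<Phi>="\<lambda>_. 1" and \<sigma>=1 and p="[:-w,1:] ^ k" and c=0])
        (auto simp: poly_power f_nonzero)
    ultimately show ?thesis by (rule in_q_gaps) (simp add: rf_nonzero_def)
  qed
  have top: "m + 1 \<in> q_gaps f 2 Pw"
  proof -
    have "holo_qdiff f 2 (- T, [:1:], f)" by (rule holo_qdiff_standard[OF deg sep]) (simp add: degree_T)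
    moreover have "qdiff_ord f 2 Pw (- T, [:1:], f) (int m)"
      by (rule qdiff_ord_Pw[where p="- T" and c=1, OF \<rho>_pos Z_holomorphic Z_w_nonzero])
        (use Y_minus_T in \<open>auto simp: f_nonzero\<close>)
    ultimately show ?thesis by (rule in_q_gaps) (simp add: rf_nonzero_def)
  qed
  have "k \<in> q_gaps f 2 Pw" if "1 \<le> k" "k \<le> 5" for k using low[of "k - 1"] that by simp
  with top show ?thesis by auto
qed

lemma q_gaps_Pw_subset:
  assumes deg: "degree f = 8" and sep: "separable_poly f"
  shows "q_gaps f 2 Pw \<subseteq> {1, 2, 3, 4, 5, m + 1}"
proof
  fix n assume "n \<in> q_gaps f 2 Pw"
  then obtain A B Q where n: "1 \<le> n" and H: "holo_qdiff f 2 (A, B, Q)"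
    and nz: "rf_nonzero (A, B, Q)" and ord: "qdiff_ord f 2 Pw (A, B, Q) (int n - 1)"
    unfolding q_gaps_def by (auto simp: split_paired_Ex)
  obtain p c where pc: "A * f = p * Q" "degree p \<le> 4" "B * f = smult c Q"
    using holo_qdiff_2_classification[OF deg sep H] by blast
  have Q: "Q \<noteq> 0" using H by (simp add: holo_qdiff_def rf_valid_def)
  have "p \<noteq> 0 \<or> c \<noteq> 0" using nz pc(1,3) f_nonzero by (auto simp: rf_nonzero_def)
  then obtain k \<Phi> \<sigma> where k: "k \<le> 4 \<or> k = m" "\<sigma> > 0" "\<Phi> holomorphic_on ball w \<sigma>" "\<Phi> w \<noteq> 0"
    "\<And>x. x \<in> ball w \<sigma> \<Longrightarrow> poly p x + c * Y x = (x - w) ^ k * \<Phi> x"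
    by (rule p_plus_cY_factor[OF pc(2)]) (rule that, assumption+)
  have "qdiff_ord f 2 Pw (A, B, Q) (int k)" by (rule qdiff_ord_Pw[OF k(2-5) pc(1,3) Q])
  hence "int n - 1 = int k" using qdiff_ord_Pw_unique ord by blast
  thus "n \<in> {1, 2, 3, 4, 5, m + 1}" using k(1) n by auto
qed

end

theorem mainTheorem3:
  fixes f :: "complex poly" and w :: complex and Y :: "complex \<Rightarrow> complex" and r :: real
  assumes "degree f = 8" and "separable_poly f" and "poly f w \<noteq> 0"
    and "r > 0" and "Y holomorphic_on ball w r"
    and "\<forall>x\<in>ball w r. (Y x)^2 = poly f x"
  shows "\<exists>n6::nat.
           qdiff_ord f 0 (Aff w (Y w)) (- taylor_poly Y w 4, 1, 1) (int n6 - 1) \<and>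
           q_gaps f 2 (Aff w (Y w)) = {1, 2, 3, 4, 5, n6} \<and>
           (n6 > 6 \<longrightarrow> q_weierstrass f 2 (Aff w (Y w)) \<and> q_weight f 2 (Aff w (Y w)) = int n6 - 6)"
proof -
  obtain m Z \<rho> where tr: "m \<ge> 5" "0 < \<rho>" "Z holomorphic_on ball w \<rho>" "Z w \<noteq> 0"
    "\<And>x. x \<in> ball w \<rho> \<Longrightarrow> Y x - poly (taylor_poly Y w 4) x = (x - w) ^ m * Z x"
    by (rule taylor_remainder_factor[OF assms(1,2,4,5,6)]) (rule that, assumption+)
  interpret taylor_contact f w Y r "taylor_poly Y w 4" m Z \<rho>
    by unfold_locales (use assms tr degree_taylor_poly in auto)
  have gaps: "q_gaps f 2 Pw = {1, 2, 3, 4, 5, m + 1}"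
    using q_gaps_Pw_subset[OF assms(1,2)] q_gaps_Pw_superset[OF assms(1,2)] by blast
  have "q_weight f 2 Pw = int (m + 1) - 6" by (rule q_weight_six_gaps[OF gaps]) (use tr in simp)
  with gaps order_Y_minus_T show ?thesis
    by (intro exI[of _ "m + 1"]) (auto simp: q_weierstrass_def)
qed

end
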